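(* Let $\alpha_1,\alpha_2>0$, $\mu_1\in\mathcal M_{\alpha_1}(\mathbb R_+)$, $\mu_2\in\mathcal M_0(\mathbb R_+)$, and $\mu=\mu_1\otimes_{\alpha_1,\alpha_2}\mu_2$. (i) If $\psi:[0,\infty)\to[1,\infty)$ is an increasing function with $\int_1^\infty\frac{dt}{t\psi(t)}<\infty$, then there is $C=C(\alpha_1,\alpha_2,\psi)>0$ such that $$\int_0^\infty\frac{|\mu|(dt)}{\psi(t)(1+t)^{\alpha_1}}\le C\|\mu_1\|_{\alpha_1}\|\mu_2\|_0.$$ (ii) If $\|\mu_1\|_{\alpha_1,\log}<\infty$, then $$\|\mu\|_{\alpha_1}\le\frac{\alpha_2^{-1}+\tilde c_{\alpha_1}}{B(\alpha_1,\alpha_2)}\|\mu_1\|_{\alpha_1,\log}\|\mu_2\|_0,$$ where $\tilde c_{\alpha_1}>0$ is any constant such that $F_{\alpha_1}(t)\le\tilde c_{\alpha_1}\frac{\log(t+e)}{(1+t)^{\alpha_1}}$ for all $t>0$, with $F_{\alpha}(t)=\int_1^\infty\frac{ds}{s(s+t)^{\alpha}}$ (such constants exist).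
   Context: $\mathbb R_+=[0,\infty)$. For $\alpha\ge0$, $\mathcal M_\alpha(\mathbb R_+)$ is the space of complex Radon measures $\mu$ on $\mathbb R_+$ with $\|\mu\|_\alpha:=\int_{\mathbb R_+}(1+t)^{-\alpha}|\mu|(dt)<\infty$; also $\|\mu\|_{\alpha,\log}:=\int_0^\infty\frac{\log(t+e)\,|\mu|(dt)}{(1+t)^\alpha}$ (possibly infinite). $B$ is the beta function. For $\mu_j\in\mathcal M_{\alpha_j}(\mathbb R_+)$, the Stieltjes convolution $\mu_1\otimes_{\alpha_1,\alpha_2}\mu_2$ is the measure $u(\tau)\,d\tau+\mu_1(\{\tau\})\mu_2(d\tau)$, where for a.e. $\tau\ge0$ $$B(\alpha_1,\alpha_2)u(\tau)=\int_{(\tau,\infty)}\int_{[0,\tau)}\frac{(\tau-s)^{\alpha_2-1}(t-\tau)^{\alpha_1-1}}{(t-s)^{\alpha_1+\alpha_2-1}}\mu_1(ds)\mu_2(dt)+\int_{(\tau,\infty)}\int_{[0,\tau)}\frac{(\tau-s)^{\alpha_1-1}(t-\tau)^{\alpha_2-1}}{(t-s)^{\alpha_1+\alpha_2-1}}\mu_2(ds)\mu_1(dt).$$ *)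

theory Defs
  imports "HOL-Analysis.Analysis"
begin

text \<open>A complex Radon measure on R_+ is represented by its polar decomposition
  mu = h nu: nu is a positive locally finite Borel measure on the real line
  concentrated on [0,inf) (this is |mu|), and h is a Borel function with |h| = 1 nu-a.e.
  For bounded Borel sets E, mu(E) is the integral of h over E w.r.t. nu.\<close>

definition cRadon_rep :: "real measure \<Rightarrow> (real \<Rightarrow> complex) \<Rightarrow> bool" where
  "cRadon_rep \<nu> h \<longleftrightarrow> sets \<nu> = sets borel \<and> emeasure \<nu> {..<0} = 0
     \<and> (\<forall>b. emeasure \<nu> {..b} < \<infinity>)
     \<and> h \<in> borel_measurable borel \<and> (AE t in \<nu>. cmod (h t) = 1)"

definition cmeas :: "real measure \<Rightarrow> (real \<Rightarrow> complex) \<Rightarrow> real set \<Rightarrow> complex" where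
  "cmeas \<nu> h E = (LINT t:E|\<nu>. h t)"

definition wnorm :: "real \<Rightarrow> real measure \<Rightarrow> ennreal" where
  "wnorm \<alpha> \<nu> = (\<integral>\<^sup>+ t. ennreal ((1 + t) powr (- \<alpha>)) \<partial>\<nu>)"

definition wnorm_log :: "real \<Rightarrow> real measure \<Rightarrow> ennreal" where
  "wnorm_log \<alpha> \<nu> = (\<integral>\<^sup>+ t. ennreal (ln (t + exp 1) / (1 + t) powr \<alpha>) \<partial>\<nu>)"

definition stieltjes_kernel :: "real \<Rightarrow> real \<Rightarrow> real \<Rightarrow> real \<Rightarrow> real \<Rightarrow> real" where
  "stieltjes_kernel a b \<tau> s t =
     (\<tau> - s) powr (b - 1) * (t - \<tau>) powr (a - 1) / (t - s) powr (a + b - 1)"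

definition stieltjes_part ::
  "real \<Rightarrow> real \<Rightarrow> real measure \<Rightarrow> (real \<Rightarrow> complex) \<Rightarrow> real measure \<Rightarrow> (real \<Rightarrow> complex)
    \<Rightarrow> real \<Rightarrow> complex" where
  "stieltjes_part a b \<nu>\<^sub>1 h\<^sub>1 \<nu>\<^sub>2 h\<^sub>2 \<tau> =
     (\<integral> t. indicator {\<tau><..} t *\<^sub>R
        ((\<integral> s. indicator {0..<\<tau>} s *\<^sub>R (complex_of_real (stieltjes_kernel a b \<tau> s t) * h\<^sub>1 s) \<partial>\<nu>\<^sub>1)
         * h\<^sub>2 t) \<partial>\<nu>\<^sub>2)"

definition stieltjes_density ::
  "real \<Rightarrow> real \<Rightarrow> real measure \<Rightarrow> (real \<Rightarrow> complex) \<Rightarrow> real measure \<Rightarrow> (real \<Rightarrow> complex)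
    \<Rightarrow> real \<Rightarrow> complex" where
  "stieltjes_density a1 a2 \<nu>\<^sub>1 h\<^sub>1 \<nu>\<^sub>2 h\<^sub>2 \<tau> =
     (stieltjes_part a1 a2 \<nu>\<^sub>1 h\<^sub>1 \<nu>\<^sub>2 h\<^sub>2 \<tau> + stieltjes_part a2 a1 \<nu>\<^sub>2 h\<^sub>2 \<nu>\<^sub>1 h\<^sub>1 \<tau>)
       / complex_of_real (Beta a1 a2)"

definition stieltjes_conv ::
  "real \<Rightarrow> real \<Rightarrow> real measure \<Rightarrow> (real \<Rightarrow> complex) \<Rightarrow> real measure \<Rightarrow> (real \<Rightarrow> complex)
    \<Rightarrow> real set \<Rightarrow> complex" where
  "stieltjes_conv a1 a2 \<nu>\<^sub>1 h\<^sub>1 \<nu>\<^sub>2 h\<^sub>2 E =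
     (LINT \<tau>:(E \<inter> {0..})|lborel. stieltjes_density a1 a2 \<nu>\<^sub>1 h\<^sub>1 \<nu>\<^sub>2 h\<^sub>2 \<tau>)
     + (LINT \<tau>:E|\<nu>\<^sub>2. cmeas \<nu>\<^sub>1 h\<^sub>1 {\<tau>} * h\<^sub>2 \<tau>)"

definition total_variation :: "(real set \<Rightarrow> complex) \<Rightarrow> real measure" where
  "total_variation m = measure_of UNIV (sets borel)
     (\<lambda>A. SUP E \<in> {E :: nat \<Rightarrow> real set. disjoint_family E \<and> (\<Union>i. E i) = A
                     \<and> (\<forall>i. E i \<in> sets borel \<and> bounded (E i))}.
            \<Sum>i. ennreal (cmod (m (E i))))"

definition F_fun :: "real \<Rightarrow> real \<Rightarrow> real" where
  "F_fun \<alpha> t = (LBINT s:{1..}. 1 / (s * (s + t) powr \<alpha>))"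

end

theory Submission
  imports Defs
begin

(* The total variation |mu| is dominated, set by set, by the measure with density
   (P12 + P21) / B on [0, oo), B = Beta alpha1 alpha2, plus the measure mu1({tau}) |mu2|(dtau)
   carrying the atoms; here Pij is the Stieltjes part with |mu_i| and the absolute value of the
   kernel in place of mu_i and the kernel.  By Tonelli, the integral of G against |mu| is then at most a double
   integral against |mu1| x |mu2| of a weight w_G(s, t).  The affine substitution
   tau = s + (t - s) x turns the kernel into a Beta density, so for G antitone with
   G(tau) <= (1 + tau)^(-alpha1) the weight is at most (1 + s)^(-alpha1) on and above the
   diagonal s <= t.  Below it, splitting
     x^(alpha1 - 1) (1 - x)^(alpha2 - 1) <= x^(alpha1 - 1) + x^alpha1 (1 - x)^(alpha2 - 1)
   bounds the weight by (1/B) (int_0^1 G(s x) x^(alpha1 - 1) dx + (1 + s)^(-alpha1) / alpha2).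
   In (i) the dilation y = s x bounds the remaining integral by
   2^alpha1 (1 + s)^(-alpha1) (1/alpha1 + int_1^oo dt / (t psi(t))); in (ii) the substitution
   x = 1/y shows that it is at most F_alpha1(s). *)

lemma sets_total_variation [simp]: "sets (total_variation m) = sets borel"
proof -
  have "sigma_sets UNIV (sets borel) = (sets borel :: real set set)"
    using sets.sigma_sets_eq[of borel] by simp
  then show ?thesis
    unfolding total_variation_def by (subst sets_measure_of) auto
qed

lemma emeasure_total_variation_le:
  fixes m :: "real set \<Rightarrow> complex" and N\<^sub>1 N\<^sub>2 :: "real measure"
  assumes N\<^sub>1: "sets N\<^sub>1 = sets borel" and N\<^sub>2: "sets N\<^sub>2 = sets borel"
    and le: "\<And>E. E \<in> sets borel \<Longrightarrow> bounded E \<Longrightarrow>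
               ennreal (cmod (m E)) \<le> emeasure N\<^sub>1 E + emeasure N\<^sub>2 E"
  shows "emeasure (total_variation m) A \<le> emeasure N\<^sub>1 A + emeasure N\<^sub>2 A"
proof (cases "A \<in> sets borel")
  case A: True
  have "(\<Sum>i. ennreal (cmod (m (E i)))) \<le> emeasure N\<^sub>1 A + emeasure N\<^sub>2 A"
    if E: "disjoint_family E" "(\<Union>i. E i) = A" "\<And>i. E i \<in> sets borel" "\<And>i. bounded (E i)"
    for E :: "nat \<Rightarrow> real set"
  proof -
    have "(\<Sum>i. ennreal (cmod (m (E i)))) \<le> (\<Sum>i. emeasure N\<^sub>1 (E i) + emeasure N\<^sub>2 (E i))"
      by (intro suminf_le le E summableI)
    also have "\<dots> = (\<Sum>i. emeasure N\<^sub>1 (E i)) + (\<Sum>i. emeasure N\<^sub>2 (E i))"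
      by (rule suminf_add[symmetric]) auto
    also have "\<dots> = emeasure N\<^sub>1 (\<Union>i. E i) + emeasure N\<^sub>2 (\<Union>i. E i)"
      using E N\<^sub>1 N\<^sub>2 by (simp add: suminf_emeasure image_subset_iff)
    finally show ?thesis
      using E(2) by simp
  qed
  moreover have "sigma_sets UNIV (sets borel) = (sets borel :: real set set)"
    using sets.sigma_sets_eq[of borel] by simp
  ultimately show ?thesis
    using A unfolding total_variation_def emeasure_measure_of_conv by (auto intro!: SUP_least)
qed (simp add: emeasure_notin_sets)

lemma nn_integral_le_add_measures:
  fixes M N\<^sub>1 N\<^sub>2 :: "'a measure"
  assumes M: "sets M = sets N\<^sub>1" and N\<^sub>2: "sets N\<^sub>2 = sets N\<^sub>1"
    and le: "\<And>A. emeasure M A \<le> emeasure N\<^sub>1 A + emeasure N\<^sub>2 A"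
  shows "(\<integral>\<^sup>+x. g x \<partial>M) \<le> (\<integral>\<^sup>+x. g x \<partial>N\<^sub>1) + (\<integral>\<^sup>+x. g x \<partial>N\<^sub>2)"
  unfolding nn_integral_def[of M]
proof (rule SUP_least, clarify)
  fix f assume sf: "simple_function M f" and fg: "f \<le> g"
  have space: "space M = space N\<^sub>1" "space N\<^sub>2 = space N\<^sub>1"
    using sets_eq_imp_space_eq[OF M] sets_eq_imp_space_eq[OF N\<^sub>2] by simp_all
  have sf1: "simple_function N\<^sub>1 f" and sf2: "simple_function N\<^sub>2 f"
    using sf M N\<^sub>2 by (simp_all add: simple_function_def space measurable_def)
  have "integral\<^sup>S M f = (\<Sum>x\<in>f ` space N\<^sub>1. x * emeasure M (f -` {x} \<inter> space N\<^sub>1))"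
    by (simp add: simple_integral_def space)
  also have "\<dots> \<le> (\<Sum>x\<in>f ` space N\<^sub>1. x * emeasure N\<^sub>1 (f -` {x} \<inter> space N\<^sub>1)
                      + x * emeasure N\<^sub>2 (f -` {x} \<inter> space N\<^sub>1))"
    by (intro sum_mono) (metis distrib_left le mult_left_mono zero_le)
  also have "\<dots> = integral\<^sup>S N\<^sub>1 f + integral\<^sup>S N\<^sub>2 f"
    by (simp add: simple_integral_def space sum.distrib)
  also have "\<dots> = integral\<^sup>N N\<^sub>1 f + integral\<^sup>N N\<^sub>2 f"
    using sf1 sf2 by (simp add: nn_integral_eq_simple_integral)
  also have "\<dots> \<le> (\<integral>\<^sup>+x. g x \<partial>N\<^sub>1) + (\<integral>\<^sup>+x. g x \<partial>N\<^sub>2)"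
    using fg by (intro add_mono nn_integral_mono) (auto simp: le_fun_def)
  finally show "integral\<^sup>S M f \<le> (\<integral>\<^sup>+x. g x \<partial>N\<^sub>1) + (\<integral>\<^sup>+x. g x \<partial>N\<^sub>2)" .
qed

lemma ennreal_norm_integral_le:
  fixes f :: "'a \<Rightarrow> 'b::{banach, second_countable_topology}"
  shows "ennreal (norm (integral\<^sup>L M f)) \<le> (\<integral>\<^sup>+x. ennreal (norm (f x)) \<partial>M)"
  by (cases "integrable M f") (auto simp: integral_norm_bound_ennreal not_integrable_integral_eq)

lemma Beta_real_pos: "0 < a \<Longrightarrow> 0 < b \<Longrightarrow> 0 < Beta a (b::real)"
  by (simp add: Beta_def)

lemma cRadon_rep_sets: "cRadon_rep \<nu> h \<Longrightarrow> sets \<nu> = sets borel"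
  by (simp add: cRadon_rep_def)

lemma cRadon_rep_space: "cRadon_rep \<nu> h \<Longrightarrow> space \<nu> = UNIV"
  using sets_eq_imp_space_eq[OF cRadon_rep_sets] by simp

lemma cRadon_rep_AE_norm: "cRadon_rep \<nu> h \<Longrightarrow> AE t in \<nu>. cmod (h t) = 1"
  by (simp add: cRadon_rep_def)

lemma cRadon_rep_AE_nonneg:
  assumes "cRadon_rep \<nu> h"
  shows "AE t in \<nu>. 0 \<le> t"
proof (rule AE_I')
  show "{..<0} \<in> null_sets \<nu>"
    using assms by (simp add: cRadon_rep_def null_sets_def)
qed (auto simp: cRadon_rep_space[OF assms])

lemma cRadon_rep_sigma_finite:
  assumes "cRadon_rep \<nu> h"
  shows "sigma_finite_measure \<nu>"
  unfolding sigma_finite_measure_def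
proof (intro exI[of _ "range (\<lambda>n::nat. {..real n})"] conjI)
  show "\<Union> (range (\<lambda>n::nat. {..real n})) = space \<nu>"
    using real_arch_simple by (auto simp: cRadon_rep_space[OF assms])
  show "\<forall>a\<in>range (\<lambda>n::nat. {..real n}). emeasure \<nu> a \<noteq> \<infinity>"
    using assms unfolding cRadon_rep_def by (auto simp: less_top)
qed (auto simp: cRadon_rep_sets[OF assms])

lemma wnorm_0_eq_emeasure: "cRadon_rep \<nu> h \<Longrightarrow> wnorm 0 \<nu> = emeasure \<nu> UNIV"
  unfolding wnorm_def
  by (subst nn_integral_cong_AE[where v = "\<lambda>_. 1"])
     (auto elim!: eventually_mono[OF cRadon_rep_AE_nonneg] simp: cRadon_rep_space)

section \<open>Domination of the total variation\<close>

lemma measurable_stieltjes_kernel [measurable (raw)]: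
  assumes [measurable]: "f \<in> borel_measurable M" "g \<in> borel_measurable M" "h \<in> borel_measurable M"
  shows "(\<lambda>x. stieltjes_kernel a b (f x) (g x) (h x)) \<in> borel_measurable M"
  unfolding stieltjes_kernel_def by measurable

definition abs_stieltjes_part :: "real \<Rightarrow> real \<Rightarrow> real measure \<Rightarrow> real measure \<Rightarrow> real \<Rightarrow> ennreal"
  where "abs_stieltjes_part a b \<nu>\<^sub>1 \<nu>\<^sub>2 \<tau> = (\<integral>\<^sup>+t. indicator {\<tau><..} t *
      (\<integral>\<^sup>+s. indicator {0..<\<tau>} s * ennreal \<bar>stieltjes_kernel a b \<tau> s t\<bar> \<partial>\<nu>\<^sub>1) \<partial>\<nu>\<^sub>2)"

definition stieltjes_majorant :: "real \<Rightarrow> real \<Rightarrow> real measure \<Rightarrow> real measure \<Rightarrow> real \<Rightarrow> ennreal"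
  where "stieltjes_majorant a\<^sub>1 a\<^sub>2 \<nu>\<^sub>1 \<nu>\<^sub>2 \<tau> = indicator {0..} \<tau> * ennreal (1 / Beta a\<^sub>1 a\<^sub>2) *
      (abs_stieltjes_part a\<^sub>1 a\<^sub>2 \<nu>\<^sub>1 \<nu>\<^sub>2 \<tau> + abs_stieltjes_part a\<^sub>2 a\<^sub>1 \<nu>\<^sub>2 \<nu>\<^sub>1 \<tau>)"

lemma borel_measurable_abs_stieltjes_part:
  assumes [measurable_cong]: "sets \<nu>\<^sub>1 = sets borel" "sets \<nu>\<^sub>2 = sets borel"
    and "sigma_finite_measure \<nu>\<^sub>1" "sigma_finite_measure \<nu>\<^sub>2"
  shows "abs_stieltjes_part a b \<nu>\<^sub>1 \<nu>\<^sub>2 \<in> borel_measurable borel"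
proof -
  interpret \<nu>\<^sub>1: sigma_finite_measure \<nu>\<^sub>1 by fact
  interpret \<nu>\<^sub>2: sigma_finite_measure \<nu>\<^sub>2 by fact
  have eq: "abs_stieltjes_part a b \<nu>\<^sub>1 \<nu>\<^sub>2 \<tau> = (\<integral>\<^sup>+t. (if \<tau> < t then (\<integral>\<^sup>+s. (if 0 \<le> s \<and> s < \<tau> then
      ennreal \<bar>stieltjes_kernel a b \<tau> s t\<bar> else 0) \<partial>\<nu>\<^sub>1) else 0) \<partial>\<nu>\<^sub>2)" for \<tau>
    unfolding abs_stieltjes_part_def
    by (intro nn_integral_cong) (auto simp: indicator_def intro!: nn_integral_cong)
  show ?thesis
    unfolding eq[abs_def] by measurable
qed

lemma borel_measurable_stieltjes_majorant:
  assumes "cRadon_rep \<nu>\<^sub>1 h\<^sub>1" "cRadon_rep \<nu>\<^sub>2 h\<^sub>2"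
  shows "stieltjes_majorant a\<^sub>1 a\<^sub>2 \<nu>\<^sub>1 \<nu>\<^sub>2 \<in> borel_measurable borel"
proof -
  have [measurable]: "abs_stieltjes_part a\<^sub>1 a\<^sub>2 \<nu>\<^sub>1 \<nu>\<^sub>2 \<in> borel_measurable borel"
    "abs_stieltjes_part a\<^sub>2 a\<^sub>1 \<nu>\<^sub>2 \<nu>\<^sub>1 \<in> borel_measurable borel"
    using assms by (simp_all add: borel_measurable_abs_stieltjes_part cRadon_rep_sets cRadon_rep_sigma_finite)
  show ?thesis
    unfolding stieltjes_majorant_def by measurable
qed

lemma borel_measurable_emeasure_singleton:
  fixes \<nu> :: "real measure"
  assumes [measurable_cong]: "sets \<nu> = sets borel" and "sigma_finite_measure \<nu>"
  shows "(\<lambda>\<tau>. emeasure \<nu> {\<tau>}) \<in> borel_measurable borel"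
proof -
  interpret sigma_finite_measure \<nu> by fact
  have eq: "emeasure \<nu> {\<tau>} = (\<integral>\<^sup>+s. (if s = \<tau> then 1 else 0) \<partial>\<nu>)" for \<tau>
  proof -
    have "emeasure \<nu> {\<tau>} = (\<integral>\<^sup>+s. indicator {\<tau>} s \<partial>\<nu>)"
      using assms(1) by (intro nn_integral_indicator[symmetric]) simp
    also have "\<dots> = (\<integral>\<^sup>+s. (if s = \<tau> then 1 else 0) \<partial>\<nu>)"
      by (intro nn_integral_cong) (simp add: indicator_def)
    finally show ?thesis .
  qed
  show ?thesis
    unfolding eq by measurable
qed

lemma norm_stieltjes_part_le:
  assumes "cRadon_rep \<nu>\<^sub>1 h\<^sub>1" and "cRadon_rep \<nu>\<^sub>2 h\<^sub>2"
  shows "ennreal (cmod (stieltjes_part a b \<nu>\<^sub>1 h\<^sub>1 \<nu>\<^sub>2 h\<^sub>2 \<tau>)) \<le> abs_stieltjes_part a b \<nu>\<^sub>1 \<nu>\<^sub>2 \<tau>"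
proof -
  define I where "I t = (\<integral>s. indicator {0..<\<tau>} s *\<^sub>R
      (complex_of_real (stieltjes_kernel a b \<tau> s t) * h\<^sub>1 s) \<partial>\<nu>\<^sub>1)" for t
  have I: "ennreal (cmod (I t)) \<le>
      (\<integral>\<^sup>+s. indicator {0..<\<tau>} s * ennreal \<bar>stieltjes_kernel a b \<tau> s t\<bar> \<partial>\<nu>\<^sub>1)" for t
  proof -
    have "ennreal (cmod (I t)) \<le> (\<integral>\<^sup>+s. ennreal (cmod (indicator {0..<\<tau>} s *\<^sub>R
        (complex_of_real (stieltjes_kernel a b \<tau> s t) * h\<^sub>1 s))) \<partial>\<nu>\<^sub>1)"
      unfolding I_def by (rule ennreal_norm_integral_le)
    also have "\<dots> = (\<integral>\<^sup>+s. indicator {0..<\<tau>} s * ennreal \<bar>stieltjes_kernel a b \<tau> s t\<bar> \<partial>\<nu>\<^sub>1)"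
      by (intro nn_integral_cong_AE, use cRadon_rep_AE_norm[OF assms(1)] in eventually_elim)
         (simp add: norm_mult indicator_def)
    finally show ?thesis .
  qed
  have "ennreal (cmod (stieltjes_part a b \<nu>\<^sub>1 h\<^sub>1 \<nu>\<^sub>2 h\<^sub>2 \<tau>)) \<le>
      (\<integral>\<^sup>+t. ennreal (cmod (indicator {\<tau><..} t *\<^sub>R (I t * h\<^sub>2 t))) \<partial>\<nu>\<^sub>2)"
    unfolding stieltjes_part_def I_def by (rule ennreal_norm_integral_le)
  also have "\<dots> = (\<integral>\<^sup>+t. indicator {\<tau><..} t * ennreal (cmod (I t)) \<partial>\<nu>\<^sub>2)"
    by (intro nn_integral_cong_AE, use cRadon_rep_AE_norm[OF assms(2)] in eventually_elim)
       (simp add: norm_mult indicator_def)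
  also have "\<dots> \<le> abs_stieltjes_part a b \<nu>\<^sub>1 \<nu>\<^sub>2 \<tau>"
    unfolding abs_stieltjes_part_def by (intro nn_integral_mono mult_left_mono I) auto
  finally show ?thesis .
qed

lemma norm_stieltjes_density_le:
  assumes "cRadon_rep \<nu>\<^sub>1 h\<^sub>1" "cRadon_rep \<nu>\<^sub>2 h\<^sub>2" "0 < a\<^sub>1" "0 < a\<^sub>2" "0 \<le> \<tau>"
  shows "ennreal (cmod (stieltjes_density a\<^sub>1 a\<^sub>2 \<nu>\<^sub>1 h\<^sub>1 \<nu>\<^sub>2 h\<^sub>2 \<tau>)) \<le> stieltjes_majorant a\<^sub>1 a\<^sub>2 \<nu>\<^sub>1 \<nu>\<^sub>2 \<tau>"
proof -
  let ?p\<^sub>1 = "stieltjes_part a\<^sub>1 a\<^sub>2 \<nu>\<^sub>1 h\<^sub>1 \<nu>\<^sub>2 h\<^sub>2 \<tau>" and ?p\<^sub>2 = "stieltjes_part a\<^sub>2 a\<^sub>1 \<nu>\<^sub>2 h\<^sub>2 \<nu>\<^sub>1 h\<^sub>1 \<tau>"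
  have B: "0 < Beta a\<^sub>1 a\<^sub>2"
    using assms by (simp add: Beta_real_pos)
  have "cmod (stieltjes_density a\<^sub>1 a\<^sub>2 \<nu>\<^sub>1 h\<^sub>1 \<nu>\<^sub>2 h\<^sub>2 \<tau>) \<le> 1 / Beta a\<^sub>1 a\<^sub>2 * (cmod ?p\<^sub>1 + cmod ?p\<^sub>2)"
    using B by (simp add: stieltjes_density_def norm_divide divide_right_mono norm_triangle_ineq)
  then have "ennreal (cmod (stieltjes_density a\<^sub>1 a\<^sub>2 \<nu>\<^sub>1 h\<^sub>1 \<nu>\<^sub>2 h\<^sub>2 \<tau>))
      \<le> ennreal (1 / Beta a\<^sub>1 a\<^sub>2 * (cmod ?p\<^sub>1 + cmod ?p\<^sub>2))"
    by (rule ennreal_leI)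
  also have "\<dots> = ennreal (1 / Beta a\<^sub>1 a\<^sub>2) * (ennreal (cmod ?p\<^sub>1) + ennreal (cmod ?p\<^sub>2))"
    using B by (subst ennreal_mult) (auto simp: ennreal_plus)
  also have "\<dots> \<le> stieltjes_majorant a\<^sub>1 a\<^sub>2 \<nu>\<^sub>1 \<nu>\<^sub>2 \<tau>"
    unfolding stieltjes_majorant_def using assms
    by (auto intro!: mult_left_mono add_mono norm_stieltjes_part_le)
  finally show ?thesis .
qed

lemma norm_cmeas_singleton_le:
  assumes "cRadon_rep \<nu> h"
  shows "ennreal (cmod (cmeas \<nu> h {\<tau>})) \<le> emeasure \<nu> {\<tau>}"
proof -
  have "ennreal (cmod (cmeas \<nu> h {\<tau>})) \<le> (\<integral>\<^sup>+s. ennreal (cmod (indicator {\<tau>} s *\<^sub>R h s)) \<partial>\<nu>)"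
    unfolding cmeas_def set_lebesgue_integral_def by (rule ennreal_norm_integral_le)
  also have "\<dots> = (\<integral>\<^sup>+s. indicator {\<tau>} s \<partial>\<nu>)"
    by (intro nn_integral_cong_AE, use cRadon_rep_AE_norm[OF assms] in eventually_elim)
       (simp add: indicator_def)
  also have "\<dots> = emeasure \<nu> {\<tau>}"
    using cRadon_rep_sets[OF assms] by (simp add: nn_integral_indicator)
  finally show ?thesis .
qed

lemma norm_stieltjes_conv_le:
  assumes R\<^sub>1: "cRadon_rep \<nu>\<^sub>1 h\<^sub>1" and R\<^sub>2: "cRadon_rep \<nu>\<^sub>2 h\<^sub>2" and "0 < a\<^sub>1" "0 < a\<^sub>2"
    and E: "E \<in> sets borel"
  shows "ennreal (cmod (stieltjes_conv a\<^sub>1 a\<^sub>2 \<nu>\<^sub>1 h\<^sub>1 \<nu>\<^sub>2 h\<^sub>2 E))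
      \<le> emeasure (density lborel (stieltjes_majorant a\<^sub>1 a\<^sub>2 \<nu>\<^sub>1 \<nu>\<^sub>2)) E
        + emeasure (density \<nu>\<^sub>2 (\<lambda>\<tau>. emeasure \<nu>\<^sub>1 {\<tau>})) E"
proof -
  note [measurable] = borel_measurable_stieltjes_majorant[OF R\<^sub>1 R\<^sub>2]
    borel_measurable_emeasure_singleton[OF cRadon_rep_sets[OF R\<^sub>1] cRadon_rep_sigma_finite[OF R\<^sub>1]]
  note [measurable_cong] = cRadon_rep_sets[OF R\<^sub>2]
  define X where "X = (LINT \<tau>:(E \<inter> {0..})|lborel. stieltjes_density a\<^sub>1 a\<^sub>2 \<nu>\<^sub>1 h\<^sub>1 \<nu>\<^sub>2 h\<^sub>2 \<tau>)"
  define Y where "Y = (LINT \<tau>:E|\<nu>\<^sub>2. cmeas \<nu>\<^sub>1 h\<^sub>1 {\<tau>} * h\<^sub>2 \<tau>)"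
  have "ennreal (cmod X) \<le> (\<integral>\<^sup>+\<tau>. ennreal (cmod (indicator (E \<inter> {0..}) \<tau> *\<^sub>R
      stieltjes_density a\<^sub>1 a\<^sub>2 \<nu>\<^sub>1 h\<^sub>1 \<nu>\<^sub>2 h\<^sub>2 \<tau>)) \<partial>lborel)"
    unfolding X_def set_lebesgue_integral_def by (rule ennreal_norm_integral_le)
  also have "\<dots> \<le> (\<integral>\<^sup>+\<tau>. stieltjes_majorant a\<^sub>1 a\<^sub>2 \<nu>\<^sub>1 \<nu>\<^sub>2 \<tau> * indicator E \<tau> \<partial>lborel)"
    using norm_stieltjes_density_le[OF R\<^sub>1 R\<^sub>2 assms(3,4)]
    by (intro nn_integral_mono) (auto simp: indicator_def)
  also have "\<dots> = emeasure (density lborel (stieltjes_majorant a\<^sub>1 a\<^sub>2 \<nu>\<^sub>1 \<nu>\<^sub>2)) E"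
    using E by (simp add: emeasure_density)
  finally have X: "ennreal (cmod X) \<le> emeasure (density lborel (stieltjes_majorant a\<^sub>1 a\<^sub>2 \<nu>\<^sub>1 \<nu>\<^sub>2)) E" .
  have "ennreal (cmod Y) \<le> (\<integral>\<^sup>+\<tau>. ennreal (cmod (indicator E \<tau> *\<^sub>R (cmeas \<nu>\<^sub>1 h\<^sub>1 {\<tau>} * h\<^sub>2 \<tau>))) \<partial>\<nu>\<^sub>2)"
    unfolding Y_def set_lebesgue_integral_def by (rule ennreal_norm_integral_le)
  also have "\<dots> \<le> (\<integral>\<^sup>+\<tau>. emeasure \<nu>\<^sub>1 {\<tau>} * indicator E \<tau> \<partial>\<nu>\<^sub>2)"
    by (intro nn_integral_mono_AE, use cRadon_rep_AE_norm[OF R\<^sub>2] in eventually_elim)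
       (use norm_cmeas_singleton_le[OF R\<^sub>1] in \<open>auto simp: indicator_def norm_mult\<close>)
  also have "\<dots> = emeasure (density \<nu>\<^sub>2 (\<lambda>\<tau>. emeasure \<nu>\<^sub>1 {\<tau>})) E"
    using E by (simp add: emeasure_density cRadon_rep_sets[OF R\<^sub>2])
  finally have Y: "ennreal (cmod Y) \<le> emeasure (density \<nu>\<^sub>2 (\<lambda>\<tau>. emeasure \<nu>\<^sub>1 {\<tau>})) E" .
  have "ennreal (cmod (stieltjes_conv a\<^sub>1 a\<^sub>2 \<nu>\<^sub>1 h\<^sub>1 \<nu>\<^sub>2 h\<^sub>2 E)) \<le> ennreal (cmod X) + ennreal (cmod Y)"
    unfolding stieltjes_conv_def X_def[symmetric] Y_def[symmetric]
    by (simp add: ennreal_plus[symmetric] ennreal_leI norm_triangle_ineq del: ennreal_plus)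
  with X Y show ?thesis
    by (meson add_mono order_trans)
qed

lemma emeasure_total_variation_stieltjes_conv_le:
  assumes "cRadon_rep \<nu>\<^sub>1 h\<^sub>1" "cRadon_rep \<nu>\<^sub>2 h\<^sub>2" "0 < a\<^sub>1" "0 < a\<^sub>2"
  shows "emeasure (total_variation (stieltjes_conv a\<^sub>1 a\<^sub>2 \<nu>\<^sub>1 h\<^sub>1 \<nu>\<^sub>2 h\<^sub>2)) A
      \<le> emeasure (density lborel (stieltjes_majorant a\<^sub>1 a\<^sub>2 \<nu>\<^sub>1 \<nu>\<^sub>2)) A
        + emeasure (density \<nu>\<^sub>2 (\<lambda>\<tau>. emeasure \<nu>\<^sub>1 {\<tau>})) A"
  using assms
  by (intro emeasure_total_variation_le norm_stieltjes_conv_le) (simp_all add: cRadon_rep_sets)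

lemma AE_total_variation_stieltjes_conv_nonneg:
  assumes R\<^sub>1: "cRadon_rep \<nu>\<^sub>1 h\<^sub>1" and R\<^sub>2: "cRadon_rep \<nu>\<^sub>2 h\<^sub>2" and "0 < a\<^sub>1" "0 < a\<^sub>2"
  shows "AE t in total_variation (stieltjes_conv a\<^sub>1 a\<^sub>2 \<nu>\<^sub>1 h\<^sub>1 \<nu>\<^sub>2 h\<^sub>2). 0 \<le> t"
proof (rule AE_I')
  note [measurable] = borel_measurable_stieltjes_majorant[OF R\<^sub>1 R\<^sub>2]
    borel_measurable_emeasure_singleton[OF cRadon_rep_sets[OF R\<^sub>1] cRadon_rep_sigma_finite[OF R\<^sub>1]]
  have "(\<lambda>\<tau>. stieltjes_majorant a\<^sub>1 a\<^sub>2 \<nu>\<^sub>1 \<nu>\<^sub>2 \<tau> * indicator {..<0} \<tau>) = (\<lambda>_. 0)"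
    by (auto simp: stieltjes_majorant_def indicator_def)
  then have "emeasure (density lborel (stieltjes_majorant a\<^sub>1 a\<^sub>2 \<nu>\<^sub>1 \<nu>\<^sub>2)) {..<0} = 0"
    by (subst emeasure_density) auto
  moreover have "(\<integral>\<^sup>+\<tau>. emeasure \<nu>\<^sub>1 {\<tau>} * indicator {..<0} \<tau> \<partial>\<nu>\<^sub>2) = (\<integral>\<^sup>+\<tau>. 0 \<partial>\<nu>\<^sub>2)"
    by (intro nn_integral_cong_AE, use cRadon_rep_AE_nonneg[OF R\<^sub>2] in eventually_elim) simp
  then have "emeasure (density \<nu>\<^sub>2 (\<lambda>\<tau>. emeasure \<nu>\<^sub>1 {\<tau>})) {..<0} = 0"
    using cRadon_rep_sets[OF R\<^sub>2] by (subst emeasure_density) auto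
  ultimately show "{..<0} \<in> null_sets (total_variation (stieltjes_conv a\<^sub>1 a\<^sub>2 \<nu>\<^sub>1 h\<^sub>1 \<nu>\<^sub>2 h\<^sub>2))"
    using emeasure_total_variation_stieltjes_conv_le[OF assms, of "{..<0}"]
    by (simp add: null_sets_def)
qed auto

section \<open>Reduction to a pointwise weight\<close>

lemma pred_mem_greaterThanLessThan [measurable (raw)]:
  fixes f g h :: "'a \<Rightarrow> real"
  assumes [measurable]: "f \<in> borel_measurable M" "g \<in> borel_measurable M" "h \<in> borel_measurable M"
  shows "Measurable.pred M (\<lambda>x. h x \<in> {f x<..<g x})"
  unfolding greaterThanLessThan_iff by measurable

lemma nn_integral_abs_stieltjes_part:
  fixes \<nu>\<^sub>1 \<nu>\<^sub>2 :: "real measure" and G :: "real \<Rightarrow> ennreal"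
  assumes [measurable_cong]: "sets \<nu>\<^sub>1 = sets borel" "sets \<nu>\<^sub>2 = sets borel"
    and \<nu>\<^sub>1: "sigma_finite_measure \<nu>\<^sub>1" and \<nu>\<^sub>2: "sigma_finite_measure \<nu>\<^sub>2"
    and [measurable]: "G \<in> borel_measurable borel"
  shows "(\<integral>\<^sup>+\<tau>. indicator {0..} \<tau> * G \<tau> * abs_stieltjes_part a b \<nu>\<^sub>1 \<nu>\<^sub>2 \<tau> \<partial>lborel)
       = (\<integral>\<^sup>+s. \<integral>\<^sup>+t. indicator {0..} s *
            (\<integral>\<^sup>+\<tau>. indicator {s<..<t} \<tau> * G \<tau> * ennreal \<bar>stieltjes_kernel a b \<tau> s t\<bar> \<partial>lborel) \<partial>\<nu>\<^sub>2 \<partial>\<nu>\<^sub>1)"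
proof -
  interpret \<nu>\<^sub>1: sigma_finite_measure \<nu>\<^sub>1 by fact
  interpret \<nu>\<^sub>2: sigma_finite_measure \<nu>\<^sub>2 by fact
  interpret L\<nu>\<^sub>1: pair_sigma_finite lborel \<nu>\<^sub>1
    by (intro pair_sigma_finite.intro lborel.sigma_finite_measure_axioms \<nu>\<^sub>1)
  interpret L\<nu>\<^sub>2: pair_sigma_finite lborel \<nu>\<^sub>2
    by (intro pair_sigma_finite.intro lborel.sigma_finite_measure_axioms \<nu>\<^sub>2)
  interpret \<nu>\<^sub>1\<^sub>2: pair_sigma_finite \<nu>\<^sub>1 \<nu>\<^sub>2
    by (intro pair_sigma_finite.intro \<nu>\<^sub>1 \<nu>\<^sub>2)
  define \<Phi> where "\<Phi> \<tau> s t = indicator {0..} s *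
      (indicator {s<..<t} \<tau> * G \<tau> * ennreal \<bar>stieltjes_kernel a b \<tau> s t\<bar>)" for \<tau> s t
  have [measurable]: "(\<lambda>x. \<Phi> (f x) (g x) (h x)) \<in> borel_measurable M"
    if [measurable]: "f \<in> borel_measurable M" "g \<in> borel_measurable M" "h \<in> borel_measurable M"
    for f g h :: "'z \<Rightarrow> real" and M :: "'z measure"
    unfolding \<Phi>_def by measurable
  have "(\<integral>\<^sup>+\<tau>. indicator {0..} \<tau> * G \<tau> * abs_stieltjes_part a b \<nu>\<^sub>1 \<nu>\<^sub>2 \<tau> \<partial>lborel)
      = (\<integral>\<^sup>+\<tau>. \<integral>\<^sup>+t. \<integral>\<^sup>+s. \<Phi> \<tau> s t \<partial>\<nu>\<^sub>1 \<partial>\<nu>\<^sub>2 \<partial>lborel)"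
  proof (intro nn_integral_cong)
    fix \<tau> :: real
    have "\<Phi> \<tau> s t = indicator {0..} \<tau> * G \<tau> * (indicator {\<tau><..} t *
        (indicator {0..<\<tau>} s * ennreal \<bar>stieltjes_kernel a b \<tau> s t\<bar>))" for s t
      by (auto simp: \<Phi>_def indicator_def)
    then show "indicator {0..} \<tau> * G \<tau> * abs_stieltjes_part a b \<nu>\<^sub>1 \<nu>\<^sub>2 \<tau>
        = (\<integral>\<^sup>+t. \<integral>\<^sup>+s. \<Phi> \<tau> s t \<partial>\<nu>\<^sub>1 \<partial>\<nu>\<^sub>2)"
      by (simp add: abs_stieltjes_part_def nn_integral_cmult[symmetric] mult.assoc)
  qed
  also have "\<dots> = (\<integral>\<^sup>+t. \<integral>\<^sup>+\<tau>. \<integral>\<^sup>+s. \<Phi> \<tau> s t \<partial>\<nu>\<^sub>1 \<partial>lborel \<partial>\<nu>\<^sub>2)"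
    by (rule L\<nu>\<^sub>2.Fubini'[symmetric]) measurable
  also have "\<dots> = (\<integral>\<^sup>+t. \<integral>\<^sup>+s. \<integral>\<^sup>+\<tau>. \<Phi> \<tau> s t \<partial>lborel \<partial>\<nu>\<^sub>1 \<partial>\<nu>\<^sub>2)"
    by (intro nn_integral_cong, rule L\<nu>\<^sub>1.Fubini'[symmetric]) measurable
  also have "\<dots> = (\<integral>\<^sup>+s. \<integral>\<^sup>+t. \<integral>\<^sup>+\<tau>. \<Phi> \<tau> s t \<partial>lborel \<partial>\<nu>\<^sub>2 \<partial>\<nu>\<^sub>1)"
    by (rule \<nu>\<^sub>1\<^sub>2.Fubini') measurable
  finally show ?thesis
    by (simp add: \<Phi>_def nn_integral_cmult)
qed

lemma nn_integral_total_variation_stieltjes_conv_le_majorant: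
  fixes G :: "real \<Rightarrow> ennreal"
  assumes R\<^sub>1: "cRadon_rep \<nu>\<^sub>1 h\<^sub>1" and R\<^sub>2: "cRadon_rep \<nu>\<^sub>2 h\<^sub>2" and a: "0 < a\<^sub>1" "0 < a\<^sub>2"
    and [measurable]: "G \<in> borel_measurable borel"
  shows "(\<integral>\<^sup>+\<tau>. G \<tau> \<partial>total_variation (stieltjes_conv a\<^sub>1 a\<^sub>2 \<nu>\<^sub>1 h\<^sub>1 \<nu>\<^sub>2 h\<^sub>2))
      \<le> (\<integral>\<^sup>+\<tau>. stieltjes_majorant a\<^sub>1 a\<^sub>2 \<nu>\<^sub>1 \<nu>\<^sub>2 \<tau> * G \<tau> \<partial>lborel) + (\<integral>\<^sup>+\<tau>. emeasure \<nu>\<^sub>1 {\<tau>} * G \<tau> \<partial>\<nu>\<^sub>2)"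
proof -
  note [measurable_cong] = cRadon_rep_sets[OF R\<^sub>2]
  note [measurable] = borel_measurable_stieltjes_majorant[OF R\<^sub>1 R\<^sub>2]
    borel_measurable_emeasure_singleton[OF cRadon_rep_sets[OF R\<^sub>1] cRadon_rep_sigma_finite[OF R\<^sub>1]]
  have "(\<integral>\<^sup>+\<tau>. G \<tau> \<partial>total_variation (stieltjes_conv a\<^sub>1 a\<^sub>2 \<nu>\<^sub>1 h\<^sub>1 \<nu>\<^sub>2 h\<^sub>2))
      \<le> (\<integral>\<^sup>+\<tau>. G \<tau> \<partial>density lborel (stieltjes_majorant a\<^sub>1 a\<^sub>2 \<nu>\<^sub>1 \<nu>\<^sub>2))
        + (\<integral>\<^sup>+\<tau>. G \<tau> \<partial>density \<nu>\<^sub>2 (\<lambda>\<tau>. emeasure \<nu>\<^sub>1 {\<tau>}))"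
    using emeasure_total_variation_stieltjes_conv_le[OF R\<^sub>1 R\<^sub>2 a] cRadon_rep_sets[OF R\<^sub>2]
    by (intro nn_integral_le_add_measures) auto
  then show ?thesis
    by (simp add: nn_integral_density)
qed

lemma nn_integral_emeasure_singleton:
  fixes \<nu>\<^sub>1 \<nu>\<^sub>2 :: "real measure" and G :: "real \<Rightarrow> ennreal"
  assumes [measurable_cong]: "sets \<nu>\<^sub>1 = sets borel" "sets \<nu>\<^sub>2 = sets borel"
    and \<nu>\<^sub>1: "sigma_finite_measure \<nu>\<^sub>1" and \<nu>\<^sub>2: "sigma_finite_measure \<nu>\<^sub>2"
    and [measurable]: "G \<in> borel_measurable borel"
  shows "(\<integral>\<^sup>+t. emeasure \<nu>\<^sub>1 {t} * G t \<partial>\<nu>\<^sub>2) = (\<integral>\<^sup>+s. \<integral>\<^sup>+t. (if s = t then G s else 0) \<partial>\<nu>\<^sub>2 \<partial>\<nu>\<^sub>1)"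
proof -
  interpret \<nu>\<^sub>1\<^sub>2: pair_sigma_finite \<nu>\<^sub>1 \<nu>\<^sub>2
    by (intro pair_sigma_finite.intro \<nu>\<^sub>1 \<nu>\<^sub>2)
  have "emeasure \<nu>\<^sub>1 {t} * G t = (\<integral>\<^sup>+s. (if s = t then G s else 0) \<partial>\<nu>\<^sub>1)" for t
  proof -
    have "(\<integral>\<^sup>+s. (if s = t then G s else 0) \<partial>\<nu>\<^sub>1) = (\<integral>\<^sup>+s. G t * indicator {t} s \<partial>\<nu>\<^sub>1)"
      by (intro nn_integral_cong) (simp add: indicator_def)
    then show ?thesis
      by (simp add: nn_integral_cmult_indicator mult.commute)
  qed
  then have "(\<integral>\<^sup>+t. emeasure \<nu>\<^sub>1 {t} * G t \<partial>\<nu>\<^sub>2) = (\<integral>\<^sup>+t. \<integral>\<^sup>+s. (if s = t then G s else 0) \<partial>\<nu>\<^sub>1 \<partial>\<nu>\<^sub>2)"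
    by simp
  also have "\<dots> = (\<integral>\<^sup>+s. \<integral>\<^sup>+t. (if s = t then G s else 0) \<partial>\<nu>\<^sub>2 \<partial>\<nu>\<^sub>1)"
    by (rule \<nu>\<^sub>1\<^sub>2.Fubini') measurable
  finally show ?thesis .
qed

lemma nn_integral_stieltjes_majorant:
  fixes G :: "real \<Rightarrow> ennreal"
  assumes R\<^sub>1: "cRadon_rep \<nu>\<^sub>1 h\<^sub>1" and R\<^sub>2: "cRadon_rep \<nu>\<^sub>2 h\<^sub>2"
    and G[measurable]: "G \<in> borel_measurable borel"
  shows "(\<integral>\<^sup>+\<tau>. stieltjes_majorant a\<^sub>1 a\<^sub>2 \<nu>\<^sub>1 \<nu>\<^sub>2 \<tau> * G \<tau> \<partial>lborel)
    = ennreal (1 / Beta a\<^sub>1 a\<^sub>2) * (\<integral>\<^sup>+s. \<integral>\<^sup>+t.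
        \<integral>\<^sup>+\<tau>. indicator {s<..<t} \<tau> * G \<tau> * ennreal \<bar>stieltjes_kernel a\<^sub>1 a\<^sub>2 \<tau> s t\<bar> \<partial>lborel \<partial>\<nu>\<^sub>2 \<partial>\<nu>\<^sub>1)
    + ennreal (1 / Beta a\<^sub>1 a\<^sub>2) * (\<integral>\<^sup>+s. \<integral>\<^sup>+t.
        \<integral>\<^sup>+\<tau>. indicator {t<..<s} \<tau> * G \<tau> * ennreal \<bar>stieltjes_kernel a\<^sub>2 a\<^sub>1 \<tau> t s\<bar> \<partial>lborel \<partial>\<nu>\<^sub>2 \<partial>\<nu>\<^sub>1)"
proof -
  note sets = cRadon_rep_sets[OF R\<^sub>1] cRadon_rep_sets[OF R\<^sub>2]
  note \<sigma> = cRadon_rep_sigma_finite[OF R\<^sub>1] cRadon_rep_sigma_finite[OF R\<^sub>2]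
  note [measurable_cong] = sets
  note [measurable] = borel_measurable_abs_stieltjes_part[OF sets \<sigma>]
    borel_measurable_abs_stieltjes_part[OF sets(2,1) \<sigma>(2,1)]
  interpret \<nu>\<^sub>1\<^sub>2: pair_sigma_finite \<nu>\<^sub>1 \<nu>\<^sub>2
    by (intro pair_sigma_finite.intro \<sigma>)
  have "stieltjes_majorant a\<^sub>1 a\<^sub>2 \<nu>\<^sub>1 \<nu>\<^sub>2 \<tau> * G \<tau>
      = ennreal (1 / Beta a\<^sub>1 a\<^sub>2) * (indicator {0..} \<tau> * G \<tau> * abs_stieltjes_part a\<^sub>1 a\<^sub>2 \<nu>\<^sub>1 \<nu>\<^sub>2 \<tau>)
      + ennreal (1 / Beta a\<^sub>1 a\<^sub>2) * (indicator {0..} \<tau> * G \<tau> * abs_stieltjes_part a\<^sub>2 a\<^sub>1 \<nu>\<^sub>2 \<nu>\<^sub>1 \<tau>)" for \<tau>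
    by (simp add: stieltjes_majorant_def distrib_left mult_ac)
  then have "(\<integral>\<^sup>+\<tau>. stieltjes_majorant a\<^sub>1 a\<^sub>2 \<nu>\<^sub>1 \<nu>\<^sub>2 \<tau> * G \<tau> \<partial>lborel)
      = ennreal (1 / Beta a\<^sub>1 a\<^sub>2) * (\<integral>\<^sup>+\<tau>. indicator {0..} \<tau> * G \<tau> * abs_stieltjes_part a\<^sub>1 a\<^sub>2 \<nu>\<^sub>1 \<nu>\<^sub>2 \<tau> \<partial>lborel)
      + ennreal (1 / Beta a\<^sub>1 a\<^sub>2) * (\<integral>\<^sup>+\<tau>. indicator {0..} \<tau> * G \<tau> * abs_stieltjes_part a\<^sub>2 a\<^sub>1 \<nu>\<^sub>2 \<nu>\<^sub>1 \<tau> \<partial>lborel)"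
    by (simp add: nn_integral_add nn_integral_cmult)
  also note nn_integral_abs_stieltjes_part[OF sets \<sigma> G]
  also have "(\<integral>\<^sup>+\<tau>. indicator {0..} \<tau> * G \<tau> * abs_stieltjes_part a\<^sub>2 a\<^sub>1 \<nu>\<^sub>2 \<nu>\<^sub>1 \<tau> \<partial>lborel)
      = (\<integral>\<^sup>+t. \<integral>\<^sup>+s. indicator {0..} t *
          (\<integral>\<^sup>+\<tau>. indicator {t<..<s} \<tau> * G \<tau> * ennreal \<bar>stieltjes_kernel a\<^sub>2 a\<^sub>1 \<tau> t s\<bar> \<partial>lborel) \<partial>\<nu>\<^sub>1 \<partial>\<nu>\<^sub>2)"
    by (rule nn_integral_abs_stieltjes_part[OF sets(2,1) \<sigma>(2,1) G])
  also have "\<dots> = (\<integral>\<^sup>+s. \<integral>\<^sup>+t. indicator {0..} t *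
          (\<integral>\<^sup>+\<tau>. indicator {t<..<s} \<tau> * G \<tau> * ennreal \<bar>stieltjes_kernel a\<^sub>2 a\<^sub>1 \<tau> t s\<bar> \<partial>lborel) \<partial>\<nu>\<^sub>2 \<partial>\<nu>\<^sub>1)"
    by (rule \<nu>\<^sub>1\<^sub>2.Fubini') measurable
  also have "(\<integral>\<^sup>+s. \<integral>\<^sup>+t. indicator {0..} s *
          (\<integral>\<^sup>+\<tau>. indicator {s<..<t} \<tau> * G \<tau> * ennreal \<bar>stieltjes_kernel a\<^sub>1 a\<^sub>2 \<tau> s t\<bar> \<partial>lborel) \<partial>\<nu>\<^sub>2 \<partial>\<nu>\<^sub>1)
      = (\<integral>\<^sup>+s. \<integral>\<^sup>+t.
          \<integral>\<^sup>+\<tau>. indicator {s<..<t} \<tau> * G \<tau> * ennreal \<bar>stieltjes_kernel a\<^sub>1 a\<^sub>2 \<tau> s t\<bar> \<partial>lborel \<partial>\<nu>\<^sub>2 \<partial>\<nu>\<^sub>1)"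
    by (intro nn_integral_cong_AE, use cRadon_rep_AE_nonneg[OF R\<^sub>1] in eventually_elim) simp
  also have "(\<integral>\<^sup>+s. \<integral>\<^sup>+t. indicator {0..} t *
          (\<integral>\<^sup>+\<tau>. indicator {t<..<s} \<tau> * G \<tau> * ennreal \<bar>stieltjes_kernel a\<^sub>2 a\<^sub>1 \<tau> t s\<bar> \<partial>lborel) \<partial>\<nu>\<^sub>2 \<partial>\<nu>\<^sub>1)
      = (\<integral>\<^sup>+s. \<integral>\<^sup>+t.
          \<integral>\<^sup>+\<tau>. indicator {t<..<s} \<tau> * G \<tau> * ennreal \<bar>stieltjes_kernel a\<^sub>2 a\<^sub>1 \<tau> t s\<bar> \<partial>lborel \<partial>\<nu>\<^sub>2 \<partial>\<nu>\<^sub>1)"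
    by (rule nn_integral_cong, rule nn_integral_cong_AE, use cRadon_rep_AE_nonneg[OF R\<^sub>2] in eventually_elim)
       simp
  finally show ?thesis .
qed

text \<open>The contribution to \<open>\<integral> G d|\<mu>|\<close> of unit point masses of \<open>|\<mu>\<^sub>1|\<close> at \<open>s\<close>
  and of \<open>|\<mu>\<^sub>2|\<close> at \<open>t\<close>.\<close>

definition stieltjes_weight :: "real \<Rightarrow> real \<Rightarrow> (real \<Rightarrow> ennreal) \<Rightarrow> real \<Rightarrow> real \<Rightarrow> ennreal"
  where "stieltjes_weight a\<^sub>1 a\<^sub>2 G s t =
     ennreal (1 / Beta a\<^sub>1 a\<^sub>2) *
       (\<integral>\<^sup>+\<tau>. indicator {s<..<t} \<tau> * G \<tau> * ennreal \<bar>stieltjes_kernel a\<^sub>1 a\<^sub>2 \<tau> s t\<bar> \<partial>lborel)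
   + ennreal (1 / Beta a\<^sub>1 a\<^sub>2) *
       (\<integral>\<^sup>+\<tau>. indicator {t<..<s} \<tau> * G \<tau> * ennreal \<bar>stieltjes_kernel a\<^sub>2 a\<^sub>1 \<tau> t s\<bar> \<partial>lborel)
   + (if s = t then G s else 0)"

lemma nn_integral_total_variation_stieltjes_conv_le:
  fixes G :: "real \<Rightarrow> ennreal"
  assumes R\<^sub>1: "cRadon_rep \<nu>\<^sub>1 h\<^sub>1" and R\<^sub>2: "cRadon_rep \<nu>\<^sub>2 h\<^sub>2" and a: "0 < a\<^sub>1" "0 < a\<^sub>2"
    and G: "G \<in> borel_measurable borel"
  shows "(\<integral>\<^sup>+\<tau>. G \<tau> \<partial>total_variation (stieltjes_conv a\<^sub>1 a\<^sub>2 \<nu>\<^sub>1 h\<^sub>1 \<nu>\<^sub>2 h\<^sub>2))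
      \<le> (\<integral>\<^sup>+s. \<integral>\<^sup>+t. stieltjes_weight a\<^sub>1 a\<^sub>2 G s t \<partial>\<nu>\<^sub>2 \<partial>\<nu>\<^sub>1)"
proof -
  note sets = cRadon_rep_sets[OF R\<^sub>1] cRadon_rep_sets[OF R\<^sub>2]
  note \<sigma> = cRadon_rep_sigma_finite[OF R\<^sub>1] cRadon_rep_sigma_finite[OF R\<^sub>2]
  note [measurable_cong] = sets
  note [measurable] = G
  interpret \<nu>\<^sub>2: sigma_finite_measure \<nu>\<^sub>2 by (rule \<sigma>(2))
  have "(\<integral>\<^sup>+\<tau>. G \<tau> \<partial>total_variation (stieltjes_conv a\<^sub>1 a\<^sub>2 \<nu>\<^sub>1 h\<^sub>1 \<nu>\<^sub>2 h\<^sub>2))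
      \<le> (\<integral>\<^sup>+\<tau>. stieltjes_majorant a\<^sub>1 a\<^sub>2 \<nu>\<^sub>1 \<nu>\<^sub>2 \<tau> * G \<tau> \<partial>lborel) + (\<integral>\<^sup>+\<tau>. emeasure \<nu>\<^sub>1 {\<tau>} * G \<tau> \<partial>\<nu>\<^sub>2)"
    by (rule nn_integral_total_variation_stieltjes_conv_le_majorant[OF R\<^sub>1 R\<^sub>2 a G])
  also have "\<dots> = (\<integral>\<^sup>+s. \<integral>\<^sup>+t. stieltjes_weight a\<^sub>1 a\<^sub>2 G s t \<partial>\<nu>\<^sub>2 \<partial>\<nu>\<^sub>1)"
    unfolding nn_integral_stieltjes_majorant[OF R\<^sub>1 R\<^sub>2 G] nn_integral_emeasure_singleton[OF sets \<sigma> G]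
    by (simp add: stieltjes_weight_def nn_integral_add nn_integral_cmult)
  finally show ?thesis .
qed

section \<open>Beta integrals and the Stieltjes kernel\<close>

lemma nn_integral_Beta:
  assumes "0 < p" "0 < q"
  shows "(\<integral>\<^sup>+x. indicator {0<..<1} x * ennreal (x powr (p - 1) * (1 - x) powr (q - 1)) \<partial>lborel)
     = ennreal (Beta p q)"
proof -
  have "((\<lambda>x. x powr (p - 1) * (1 - x) powr (q - 1)) has_integral Beta p q) {0<..<1}"
    using has_integral_Beta_real[OF assms] by (simp add: has_integral_Icc_iff_Ioo)
  from nn_integral_has_integral_lebesgue'[OF _ this] show ?thesis
    by (simp add: mult.commute)
qed

lemma Beta_real_1_right:
  assumes "0 < p"
  shows "Beta p 1 = 1 / (p::real)"
proof -
  have "Gamma (p + 1) = p * Gamma p"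
    using assms by (intro Gamma_plus1) (auto elim!: nonpos_Ints_cases)
  moreover have "Gamma p \<noteq> 0"
    using Gamma_real_pos[OF assms] by simp
  ultimately show ?thesis
    using assms by (simp add: Beta_def field_simps)
qed

lemma nn_integral_powr_0_1:
  assumes "0 < p"
  shows "(\<integral>\<^sup>+x. indicator {0<..<1} x * ennreal (x powr (p - 1)) \<partial>lborel) = ennreal (1 / p)"
proof -
  have "(\<integral>\<^sup>+x. indicator {0<..<1} x * ennreal (x powr (p - 1)) \<partial>lborel)
      = (\<integral>\<^sup>+x. indicator {0<..<1} x * ennreal (x powr (p - 1) * (1 - x) powr (1 - 1)) \<partial>lborel)"
    by (intro nn_integral_cong) (simp add: indicator_def)
  then show ?thesis
    using nn_integral_Beta[OF assms zero_less_one] by (simp add: Beta_real_1_right[OF assms])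
qed

lemma nn_integral_one_minus_powr_0_1:
  assumes "0 < q"
  shows "(\<integral>\<^sup>+x. indicator {0<..<1} x * ennreal ((1 - x) powr (q - 1)) \<partial>lborel) = ennreal (1 / q)"
proof -
  have "(\<integral>\<^sup>+x. indicator {0<..<1} x * ennreal ((1 - x) powr (q - 1)) \<partial>lborel)
      = (\<integral>\<^sup>+x. indicator {0<..<1} x * ennreal (x powr (1 - 1) * (1 - x) powr (q - 1)) \<partial>lborel)"
    by (intro nn_integral_cong) (simp add: indicator_def)
  then show ?thesis
    using nn_integral_Beta[OF zero_less_one assms]
    by (simp add: Beta_commute[of 1] Beta_real_1_right[OF assms])
qed

lemma powr_mult_one_minus_powr_le:
  fixes x a b :: real
  assumes "0 < x" "x < 1" and "0 < b"
  shows "x powr (a - 1) * (1 - x) powr (b - 1) \<le> x powr (a - 1) + x powr a * (1 - x) powr (b - 1)"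
proof -
  have "(1 - x) powr (b - 1) * (1 - x) = (1 - x) powr b"
    using assms by (simp add: powr_diff)
  also have "\<dots> \<le> 1"
    using assms by (intro powr_le1) auto
  finally have "(1 - x) powr (b - 1) \<le> 1 + x * (1 - x) powr (b - 1)"
    by (simp add: algebra_simps)
  then have "x powr (a - 1) * (1 - x) powr (b - 1) \<le> x powr (a - 1) * (1 + x * (1 - x) powr (b - 1))"
    by (intro mult_left_mono) auto
  also have "\<dots> = x powr (a - 1) + x powr a * (1 - x) powr (b - 1)"
    using assms by (simp add: algebra_simps powr_diff)
  finally show ?thesis .
qed

lemma Beta_le_add_inverse:
  fixes a b :: real
  assumes a: "0 < a" and b: "0 < b"
  shows "Beta a b \<le> 1 / a + 1 / b"
proof -
  have "x powr (a - 1) * (1 - x) powr (b - 1) \<le> x powr (a - 1) + (1 - x) powr (b - 1)"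
    if "0 < x" "x < 1" for x :: real
  proof -
    have "x powr a * (1 - x) powr (b - 1) \<le> (1 - x) powr (b - 1)"
      using that a by (intro mult_left_le_one_le powr_le1) auto
    then show ?thesis
      using powr_mult_one_minus_powr_le[OF that b, of a] by linarith
  qed
  then have "ennreal (Beta a b) \<le> (\<integral>\<^sup>+x. indicator {0<..<1} x * ennreal (x powr (a - 1))
      + indicator {0<..<1} x * ennreal ((1 - x) powr (b - 1)) \<partial>lborel)"
    unfolding nn_integral_Beta[OF a b, symmetric]
    by (intro nn_integral_mono) (auto simp: indicator_def ennreal_plus[symmetric] simp del: ennreal_plus)
  also have "\<dots> = ennreal (1 / a + 1 / b)"
    using a b by (simp add: nn_integral_add nn_integral_powr_0_1 nn_integral_one_minus_powr_0_1)
  finally show ?thesis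
    using a b by (subst (asm) ennreal_le_iff) auto
qed

lemma stieltjes_kernel_affine:
  fixes s t x a b :: real
  assumes "s < t" "0 < x" "x < 1"
  shows "(t - s) * stieltjes_kernel a b (s + (t - s) * x) s t = x powr (b - 1) * (1 - x) powr (a - 1)"
proof -
  define c where "c = t - s"
  have c: "0 < c"
    using assms by (simp add: c_def)
  have "t - (s + c * x) = c * (1 - x)"
    by (simp add: c_def algebra_simps)
  then have "c * stieltjes_kernel a b (s + c * x) s t
      = c powr (1 + (b - 1) + (a - 1) - (a + b - 1)) * (x powr (b - 1) * (1 - x) powr (a - 1))"
    using c assms
    by (simp add: stieltjes_kernel_def c_def[symmetric] powr_mult powr_add powr_diff)
  then show ?thesis
    using assms by (simp add: c_def)
qed

lemma affine_mem_greaterThanLessThan_iff: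
  fixes s t x :: real
  assumes "s < t"
  shows "s + (t - s) * x \<in> {s<..<t} \<longleftrightarrow> x \<in> {0<..<1}"
proof -
  have "s < s + (t - s) * x \<longleftrightarrow> 0 < x"
    using assms by (simp add: zero_less_mult_iff)
  moreover have "s + (t - s) * x < t \<longleftrightarrow> (t - s) * x < (t - s) * 1"
    by (simp add: algebra_simps)
  ultimately show ?thesis
    using assms by (simp add: mult_less_cancel_left_pos)
qed

lemma nn_integral_stieltjes_kernel_affine:
  fixes G :: "real \<Rightarrow> ennreal"
  assumes st: "s < t" and [measurable]: "G \<in> borel_measurable borel"
  shows "(\<integral>\<^sup>+\<tau>. indicator {s<..<t} \<tau> * G \<tau> * ennreal \<bar>stieltjes_kernel a b \<tau> s t\<bar> \<partial>lborel)
    = (\<integral>\<^sup>+x. indicator {0<..<1} x * G (s + (t - s) * x) *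
          ennreal (x powr (b - 1) * (1 - x) powr (a - 1)) \<partial>lborel)"
proof -
  have c: "0 < t - s"
    using st by simp
  have "(\<integral>\<^sup>+\<tau>. indicator {s<..<t} \<tau> * G \<tau> * ennreal \<bar>stieltjes_kernel a b \<tau> s t\<bar> \<partial>lborel)
     = ennreal (t - s) * (\<integral>\<^sup>+x. indicator {s<..<t} (s + (t - s) * x) * G (s + (t - s) * x) *
          ennreal \<bar>stieltjes_kernel a b (s + (t - s) * x) s t\<bar> \<partial>lborel)"
    using c by (subst nn_integral_real_affine[where c = "t - s" and t = s]) auto
  also have "\<dots> = (\<integral>\<^sup>+x. ennreal (t - s) * (indicator {s<..<t} (s + (t - s) * x) * G (s + (t - s) * x) *
          ennreal \<bar>stieltjes_kernel a b (s + (t - s) * x) s t\<bar>) \<partial>lborel)"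
    by (rule nn_integral_cmult[symmetric]) measurable
  also have "\<dots> = (\<integral>\<^sup>+x. indicator {0<..<1} x * G (s + (t - s) * x) *
          ennreal (x powr (b - 1) * (1 - x) powr (a - 1)) \<partial>lborel)"
  proof (intro nn_integral_cong)
    fix x :: real
    note mem = affine_mem_greaterThanLessThan_iff[OF st, of x]
    show "ennreal (t - s) * (indicator {s<..<t} (s + (t - s) * x) * G (s + (t - s) * x) *
          ennreal \<bar>stieltjes_kernel a b (s + (t - s) * x) s t\<bar>)
        = indicator {0<..<1} x * G (s + (t - s) * x) * ennreal (x powr (b - 1) * (1 - x) powr (a - 1))"
    proof (cases "x \<in> {0<..<1}")
      case True
      have "(t - s) * \<bar>stieltjes_kernel a b (s + (t - s) * x) s t\<bar>
          = \<bar>(t - s) * stieltjes_kernel a b (s + (t - s) * x) s t\<bar>"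
        using c by (simp add: abs_mult)
      also have "\<dots> = x powr (b - 1) * (1 - x) powr (a - 1)"
        using True stieltjes_kernel_affine[OF st, of x a b] by simp
      finally have "ennreal (t - s) * ennreal \<bar>stieltjes_kernel a b (s + (t - s) * x) s t\<bar>
          = ennreal (x powr (b - 1) * (1 - x) powr (a - 1))"
        using c by (simp add: ennreal_mult[symmetric])
      moreover have "ennreal (t - s) * (indicator {s<..<t} (s + (t - s) * x) * G (s + (t - s) * x) *
          ennreal \<bar>stieltjes_kernel a b (s + (t - s) * x) s t\<bar>)
        = indicator {s<..<t} (s + (t - s) * x) * G (s + (t - s) * x) *
          (ennreal (t - s) * ennreal \<bar>stieltjes_kernel a b (s + (t - s) * x) s t\<bar>)"
        by (simp only: ac_simps)
      ultimately show ?thesis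
        using True mem by simp
    qed (use mem in simp)
  qed
  finally show ?thesis .
qed

lemma nn_integral_stieltjes_kernel_le:
  fixes G :: "real \<Rightarrow> ennreal"
  assumes "0 < a" "0 < b" and [measurable]: "G \<in> borel_measurable borel"
    and le: "\<And>\<tau>. s < \<tau> \<Longrightarrow> \<tau> < t \<Longrightarrow> G \<tau> \<le> v"
  shows "(\<integral>\<^sup>+\<tau>. indicator {s<..<t} \<tau> * G \<tau> * ennreal \<bar>stieltjes_kernel a b \<tau> s t\<bar> \<partial>lborel)
    \<le> v * ennreal (Beta a b)"
proof (cases "s < t")
  case st: True
  have "(\<integral>\<^sup>+\<tau>. indicator {s<..<t} \<tau> * G \<tau> * ennreal \<bar>stieltjes_kernel a b \<tau> s t\<bar> \<partial>lborel)
    \<le> (\<integral>\<^sup>+x. v * (indicator {0<..<1} x * ennreal (x powr (b - 1) * (1 - x) powr (a - 1))) \<partial>lborel)"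
    unfolding nn_integral_stieltjes_kernel_affine[OF st assms(3)]
  proof (intro nn_integral_mono)
    fix x :: real
    have "x \<in> {0<..<1} \<Longrightarrow> G (s + (t - s) * x) \<le> v"
      using affine_mem_greaterThanLessThan_iff[OF st, of x] by (intro le) auto
    then show "indicator {0<..<1} x * G (s + (t - s) * x) * ennreal (x powr (b - 1) * (1 - x) powr (a - 1))
        \<le> v * (indicator {0<..<1} x * ennreal (x powr (b - 1) * (1 - x) powr (a - 1)))"
      by (cases "x \<in> {0<..<1}") (auto simp: mult_right_mono mult.commute)
  qed
  also have "\<dots> = v * ennreal (Beta a b)"
    using assms by (simp add: nn_integral_cmult nn_integral_Beta Beta_commute)
  finally show ?thesis .
qed simp

lemma powr_neg_one_plus_mult_le:
  fixes x a \<alpha> :: real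
  assumes "0 < x" "x \<le> 1" "0 \<le> a" "0 < \<alpha>"
  shows "(1 + a * x) powr - \<alpha> * x powr \<alpha> \<le> (1 + a) powr - \<alpha>"
proof -
  have "x * (1 + a) \<le> 1 + a * x" and pos: "0 < 1 + a * x"
    using assms by (simp_all add: algebra_simps mult_left_le add_pos_nonneg)
  then have "x powr \<alpha> * (1 + a) powr \<alpha> \<le> (1 + a * x) powr \<alpha>"
    using assms by (simp add: powr_mult[symmetric] powr_mono2)
  moreover have "0 < (1 + a) powr \<alpha>" "0 < (1 + a * x) powr \<alpha>"
    using assms pos by auto
  ultimately show ?thesis
    by (simp add: powr_minus field_simps)
qed

lemma nn_integral_stieltjes_kernel_split_le:
  fixes G :: "real \<Rightarrow> ennreal"
  assumes ba: "0 \<le> b" "b < a" and a\<^sub>1: "0 < \<alpha>\<^sub>1" and a\<^sub>2: "0 < \<alpha>\<^sub>2"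
    and [measurable]: "G \<in> borel_measurable borel"
    and anti: "\<And>\<sigma> \<tau>. 0 \<le> \<sigma> \<Longrightarrow> \<sigma> \<le> \<tau> \<Longrightarrow> G \<tau> \<le> G \<sigma>"
    and dom: "\<And>\<tau>. 0 \<le> \<tau> \<Longrightarrow> G \<tau> \<le> ennreal ((1 + \<tau>) powr - \<alpha>\<^sub>1)"
  shows "(\<integral>\<^sup>+\<tau>. indicator {b<..<a} \<tau> * G \<tau> * ennreal \<bar>stieltjes_kernel \<alpha>\<^sub>2 \<alpha>\<^sub>1 \<tau> b a\<bar> \<partial>lborel)
    \<le> (\<integral>\<^sup>+x. indicator {0<..<1} x * G (a * x) * ennreal (x powr (\<alpha>\<^sub>1 - 1)) \<partial>lborel)
      + ennreal ((1 + a) powr - \<alpha>\<^sub>1 / \<alpha>\<^sub>2)"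
proof -
  let ?v = "(1 + a) powr - \<alpha>\<^sub>1"
  have pointwise: "G (b + (a - b) * x) * ennreal (x powr (\<alpha>\<^sub>1 - 1) * (1 - x) powr (\<alpha>\<^sub>2 - 1))
      \<le> G (a * x) * ennreal (x powr (\<alpha>\<^sub>1 - 1)) + ennreal ?v * ennreal ((1 - x) powr (\<alpha>\<^sub>2 - 1))"
    if x: "0 < x" "x < 1" for x
  proof -
    let ?y = "b + (a - b) * x"
    have ax: "0 \<le> a * x" "a * x \<le> ?y"
      using x ba by (auto simp: algebra_simps mult_left_le)
    have "G ?y * ennreal (x powr \<alpha>\<^sub>1) \<le> ennreal ((1 + ?y) powr - \<alpha>\<^sub>1) * ennreal (x powr \<alpha>\<^sub>1)"
      using ax by (intro mult_right_mono dom) auto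
    also have "\<dots> \<le> ennreal ((1 + a * x) powr - \<alpha>\<^sub>1 * x powr \<alpha>\<^sub>1)"
      using ax a\<^sub>1 by (auto simp: ennreal_mult[symmetric] intro!: ennreal_leI mult_right_mono powr_mono2')
    also have "\<dots> \<le> ennreal ?v"
      using x ba a\<^sub>1 by (intro ennreal_leI powr_neg_one_plus_mult_le) auto
    finally have G_below: "G ?y * ennreal (x powr \<alpha>\<^sub>1) \<le> ennreal ?v" .
    have "G ?y * ennreal (x powr (\<alpha>\<^sub>1 - 1) * (1 - x) powr (\<alpha>\<^sub>2 - 1))
        \<le> G ?y * ennreal (x powr (\<alpha>\<^sub>1 - 1) + x powr \<alpha>\<^sub>1 * (1 - x) powr (\<alpha>\<^sub>2 - 1))"
      using powr_mult_one_minus_powr_le[OF x a\<^sub>2, of \<alpha>\<^sub>1] by (intro mult_left_mono ennreal_leI) auto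
    also have "\<dots> = G ?y * ennreal (x powr (\<alpha>\<^sub>1 - 1))
        + (G ?y * ennreal (x powr \<alpha>\<^sub>1)) * ennreal ((1 - x) powr (\<alpha>\<^sub>2 - 1))"
      by (subst ennreal_plus) (simp_all add: ennreal_mult distrib_left mult.assoc)
    also have "\<dots> \<le> G (a * x) * ennreal (x powr (\<alpha>\<^sub>1 - 1)) + ennreal ?v * ennreal ((1 - x) powr (\<alpha>\<^sub>2 - 1))"
      using ax G_below by (intro add_mono mult_right_mono anti) auto
    finally show ?thesis .
  qed
  have "(\<integral>\<^sup>+\<tau>. indicator {b<..<a} \<tau> * G \<tau> * ennreal \<bar>stieltjes_kernel \<alpha>\<^sub>2 \<alpha>\<^sub>1 \<tau> b a\<bar> \<partial>lborel)
    \<le> (\<integral>\<^sup>+x. indicator {0<..<1} x * G (a * x) * ennreal (x powr (\<alpha>\<^sub>1 - 1))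
        + ennreal ?v * (indicator {0<..<1} x * ennreal ((1 - x) powr (\<alpha>\<^sub>2 - 1))) \<partial>lborel)"
    unfolding nn_integral_stieltjes_kernel_affine[OF ba(2) assms(5)]
    by (intro nn_integral_mono) (simp add: indicator_def pointwise)
  also have "\<dots> = (\<integral>\<^sup>+x. indicator {0<..<1} x * G (a * x) * ennreal (x powr (\<alpha>\<^sub>1 - 1)) \<partial>lborel)
      + ennreal ?v * ennreal (1 / \<alpha>\<^sub>2)"
    by (simp add: nn_integral_add nn_integral_cmult nn_integral_one_minus_powr_0_1[OF a\<^sub>2])
  also have "ennreal ?v * ennreal (1 / \<alpha>\<^sub>2) = ennreal (?v / \<alpha>\<^sub>2)"
    using a\<^sub>2 by (simp add: ennreal_mult[symmetric])
  finally show ?thesis .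
qed

lemma stieltjes_weight_le:
  fixes G :: "real \<Rightarrow> ennreal"
  assumes a\<^sub>1: "0 < \<alpha>\<^sub>1" and a\<^sub>2: "0 < \<alpha>\<^sub>2" and st: "0 \<le> s" "0 \<le> t"
    and [measurable]: "G \<in> borel_measurable borel"
    and anti: "\<And>\<sigma> \<tau>. 0 \<le> \<sigma> \<Longrightarrow> \<sigma> \<le> \<tau> \<Longrightarrow> G \<tau> \<le> G \<sigma>"
    and dom: "\<And>\<tau>. 0 \<le> \<tau> \<Longrightarrow> G \<tau> \<le> ennreal ((1 + \<tau>) powr - \<alpha>\<^sub>1)"
    and diagonal: "ennreal ((1 + s) powr - \<alpha>\<^sub>1) \<le> W"
    and below: "0 < s \<Longrightarrow> ennreal (1 / Beta \<alpha>\<^sub>1 \<alpha>\<^sub>2) *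
      ((\<integral>\<^sup>+x. indicator {0<..<1} x * G (s * x) * ennreal (x powr (\<alpha>\<^sub>1 - 1)) \<partial>lborel)
        + ennreal ((1 + s) powr - \<alpha>\<^sub>1 / \<alpha>\<^sub>2)) \<le> W"
  shows "stieltjes_weight \<alpha>\<^sub>1 \<alpha>\<^sub>2 G s t \<le> W"
proof (cases s t rule: linorder_cases)
  case less
  let ?v = "(1 + s) powr - \<alpha>\<^sub>1"
  have "G \<tau> \<le> ennreal ?v" if "s < \<tau>" for \<tau>
  proof -
    have "(1 + \<tau>) powr - \<alpha>\<^sub>1 \<le> ?v"
      using that st a\<^sub>1 by (intro powr_mono2') auto
    then show ?thesis
      using order_trans[OF dom[of \<tau>] ennreal_leI] that st by simp
  qed
  then have "ennreal (1 / Beta \<alpha>\<^sub>1 \<alpha>\<^sub>2) *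
      (\<integral>\<^sup>+\<tau>. indicator {s<..<t} \<tau> * G \<tau> * ennreal \<bar>stieltjes_kernel \<alpha>\<^sub>1 \<alpha>\<^sub>2 \<tau> s t\<bar> \<partial>lborel)
      \<le> ennreal (1 / Beta \<alpha>\<^sub>1 \<alpha>\<^sub>2) * (ennreal ?v * ennreal (Beta \<alpha>\<^sub>1 \<alpha>\<^sub>2))"
    using a\<^sub>1 a\<^sub>2 by (intro mult_left_mono nn_integral_stieltjes_kernel_le) auto
  also have "\<dots> = ennreal ?v"
    using Beta_real_pos[OF a\<^sub>1 a\<^sub>2] by (simp add: ennreal_mult[symmetric])
  finally show ?thesis
    using less diagonal by (simp add: stieltjes_weight_def)
next
  case equal
  then show ?thesis
    using dom[of s] st diagonal by (simp add: stieltjes_weight_def)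
next
  case greater
  then have "stieltjes_weight \<alpha>\<^sub>1 \<alpha>\<^sub>2 G s t = ennreal (1 / Beta \<alpha>\<^sub>1 \<alpha>\<^sub>2) *
      (\<integral>\<^sup>+\<tau>. indicator {t<..<s} \<tau> * G \<tau> * ennreal \<bar>stieltjes_kernel \<alpha>\<^sub>2 \<alpha>\<^sub>1 \<tau> t s\<bar> \<partial>lborel)"
    by (simp add: stieltjes_weight_def)
  also have "\<dots> \<le> ennreal (1 / Beta \<alpha>\<^sub>1 \<alpha>\<^sub>2) *
      ((\<integral>\<^sup>+x. indicator {0<..<1} x * G (s * x) * ennreal (x powr (\<alpha>\<^sub>1 - 1)) \<partial>lborel)
        + ennreal ((1 + s) powr - \<alpha>\<^sub>1 / \<alpha>\<^sub>2))"
    using greater st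
    by (intro mult_left_mono nn_integral_stieltjes_kernel_split_le a\<^sub>1 a\<^sub>2 anti dom) auto
  also have "\<dots> \<le> W"
    using greater st by (intro below) auto
  finally show ?thesis .
qed

lemma nn_integral_total_variation_stieltjes_conv_le_wnorm:
  fixes G w :: "real \<Rightarrow> ennreal"
  assumes R\<^sub>1: "cRadon_rep \<nu>\<^sub>1 h\<^sub>1" and R\<^sub>2: "cRadon_rep \<nu>\<^sub>2 h\<^sub>2" and a: "0 < \<alpha>\<^sub>1" "0 < \<alpha>\<^sub>2"
    and [measurable]: "G \<in> borel_measurable borel" "w \<in> borel_measurable borel"
    and weight: "\<And>s t. 0 \<le> s \<Longrightarrow> 0 \<le> t \<Longrightarrow> stieltjes_weight \<alpha>\<^sub>1 \<alpha>\<^sub>2 G s t \<le> w s"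
  shows "(\<integral>\<^sup>+\<tau>. G \<tau> \<partial>total_variation (stieltjes_conv \<alpha>\<^sub>1 \<alpha>\<^sub>2 \<nu>\<^sub>1 h\<^sub>1 \<nu>\<^sub>2 h\<^sub>2))
      \<le> (\<integral>\<^sup>+s. w s \<partial>\<nu>\<^sub>1) * wnorm 0 \<nu>\<^sub>2"
proof -
  note [measurable_cong] = cRadon_rep_sets[OF R\<^sub>1]
  have "(\<integral>\<^sup>+\<tau>. G \<tau> \<partial>total_variation (stieltjes_conv \<alpha>\<^sub>1 \<alpha>\<^sub>2 \<nu>\<^sub>1 h\<^sub>1 \<nu>\<^sub>2 h\<^sub>2))
      \<le> (\<integral>\<^sup>+s. \<integral>\<^sup>+t. stieltjes_weight \<alpha>\<^sub>1 \<alpha>\<^sub>2 G s t \<partial>\<nu>\<^sub>2 \<partial>\<nu>\<^sub>1)"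
    by (rule nn_integral_total_variation_stieltjes_conv_le[OF R\<^sub>1 R\<^sub>2 a]) fact
  also have "\<dots> \<le> (\<integral>\<^sup>+s. \<integral>\<^sup>+t. w s \<partial>\<nu>\<^sub>2 \<partial>\<nu>\<^sub>1)"
    by (intro nn_integral_mono_AE, use cRadon_rep_AE_nonneg[OF R\<^sub>1] in eventually_elim,
        intro nn_integral_mono_AE, use cRadon_rep_AE_nonneg[OF R\<^sub>2] in eventually_elim)
       (rule weight)
  also have "\<dots> = (\<integral>\<^sup>+s. w s \<partial>\<nu>\<^sub>1) * emeasure \<nu>\<^sub>2 UNIV"
    by (simp add: cRadon_rep_space[OF R\<^sub>2] nn_integral_multc)
  finally show ?thesis
    by (simp add: wnorm_0_eq_emeasure[OF R\<^sub>2])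
qed

section \<open>The function \<open>F_fun\<close>\<close>

lemma nn_integral_powr_atLeast:
  assumes "0 < a" "0 < \<alpha>"
  shows "(\<integral>\<^sup>+y. indicator {a..} y * ennreal (y powr (- 1 - \<alpha>)) \<partial>lborel) = ennreal (a powr - \<alpha> / \<alpha>)"
proof -
  have "((\<lambda>y. y powr (- 1 - \<alpha>)) has_integral a powr - \<alpha> / \<alpha>) {a..}"
    using has_integral_powr_to_inf[of "- 1 - \<alpha>" a] assms by simp
  from nn_integral_has_integral_lebesgue'[OF _ this] show ?thesis
    by (simp add: mult.commute)
qed

lemma nn_integral_F_fun:
  assumes t: "0 \<le> t" and \<alpha>: "0 < \<alpha>"
  shows "set_integrable lborel {1..} (\<lambda>y. 1 / (y * (y + t) powr \<alpha>))"
    and "(\<integral>\<^sup>+y. indicator {1..} y * ennreal (1 / (y * (y + t) powr \<alpha>)) \<partial>lborel) = ennreal (F_fun \<alpha> t)"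
proof -
  let ?f = "\<lambda>y. indicator {1..} y *\<^sub>R (1 / (y * (y + t) powr \<alpha>))"
  have le: "1 / (y * (y + t) powr \<alpha>) \<le> y powr (- 1 - \<alpha>)" if y: "1 \<le> y" for y
  proof -
    have "y * y powr \<alpha> \<le> y * (y + t) powr \<alpha>"
      using y t \<alpha> by (intro mult_left_mono powr_mono2) auto
    then have "1 / (y * (y + t) powr \<alpha>) \<le> 1 / (y * y powr \<alpha>)"
      using y t by (intro divide_left_mono) (auto intro!: mult_pos_pos)
    also have "\<dots> = y powr (- 1 - \<alpha>)"
      using y by (simp add: powr_diff powr_minus_divide)
    finally show ?thesis .
  qed
  have nonneg: "0 \<le> ?f y" for y
    using t by (simp add: indicator_def)
  have "(\<integral>\<^sup>+y. ennreal (?f y) \<partial>lborel) \<le> (\<integral>\<^sup>+y. indicator {1..} y * ennreal (y powr (- 1 - \<alpha>)) \<partial>lborel)"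
    by (intro nn_integral_mono) (auto simp: indicator_def intro!: ennreal_leI le)
  also have "\<dots> < \<infinity>"
    using \<alpha> by (simp add: nn_integral_powr_atLeast)
  finally have int: "integrable lborel ?f"
    using nonneg by (intro integrableI_nonneg) auto
  then show "set_integrable lborel {1..} (\<lambda>y. 1 / (y * (y + t) powr \<alpha>))"
    by (simp add: set_integrable_def)
  have "(\<integral>\<^sup>+y. indicator {1..} y * ennreal (1 / (y * (y + t) powr \<alpha>)) \<partial>lborel) = (\<integral>\<^sup>+y. ennreal (?f y) \<partial>lborel)"
    by (intro nn_integral_cong) (simp add: indicator_def)
  also have "\<dots> = ennreal (integral\<^sup>L lborel ?f)"
    by (rule nn_integral_eq_integral[OF int], rule AE_I2) (use nonneg in simp)
  also have "integral\<^sup>L lborel ?f = F_fun \<alpha> t"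
    by (simp add: F_fun_def set_lebesgue_integral_def)
  finally show "(\<integral>\<^sup>+y. indicator {1..} y * ennreal (1 / (y * (y + t) powr \<alpha>)) \<partial>lborel) = ennreal (F_fun \<alpha> t)" .
qed

lemma has_integral_F_fun_substitution:
  assumes t: "0 \<le> t" and \<alpha>: "0 < \<alpha>"
  shows "((\<lambda>x. (1 + t * x) powr - \<alpha> * x powr (\<alpha> - 1)) has_integral F_fun \<alpha> t) {0<..1}"
proof -
  define f where "f x = (1 + t * x) powr - \<alpha> * x powr (\<alpha> - 1)" for x :: real
  define g' where "g' y = - (1 / y\<^sup>2)" for y :: real
  have deriv: "((\<lambda>y. 1 / y) has_field_derivative g' y) (at y within {1..})" if "y \<in> {1..}" for y
    using that unfolding g'_def by (auto intro!: derivative_eq_intros simp: power2_eq_square)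
  have inj: "inj_on (\<lambda>y::real. 1 / y) {1..}"
    by (auto simp: inj_on_def)
  have image: "(\<lambda>y::real. 1 / y) ` {1..} = {0<..1}"
  proof
    show "{0<..1} \<subseteq> (\<lambda>y::real. 1 / y) ` {1..}"
    proof
      fix x :: real assume "x \<in> {0<..1}"
      then show "x \<in> (\<lambda>y. 1 / y) ` {1..}"
        by (intro image_eqI[of _ _ "1 / x"]) (auto simp: field_simps)
    qed
  qed (auto simp: divide_le_eq)
  have substituted: "\<bar>g' y\<bar> * f (1 / y) = 1 / (y * (y + t) powr \<alpha>)" if "y \<in> {1..}" for y
  proof -
    have y: "0 < y" "0 < y + t"
      using that t by auto
    have "1 + t * (1 / y) = (y + t) / y"
      using y by (simp add: field_simps)
    then have "f (1 / y) = ((y + t) / y) powr - \<alpha> * (1 / y) powr (\<alpha> - 1)"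
      by (simp add: f_def)
    also have "\<dots> = (y powr \<alpha> / y powr (\<alpha> - 1)) / (y + t) powr \<alpha>"
      using y by (simp add: powr_divide powr_minus_divide)
    also have "y powr \<alpha> / y powr (\<alpha> - 1) = y"
      using y by (simp add: powr_diff[symmetric])
    finally show ?thesis
      using y by (simp add: g'_def power2_eq_square)
  qed
  have "(\<lambda>y. indicator {1..} y *\<^sub>R (1 / (y * (y + t) powr \<alpha>))) \<in> borel_measurable lborel"
    by measurable
  from integrable_completion[OF this]
  have "set_integrable lebesgue {1..} (\<lambda>y. 1 / (y * (y + t) powr \<alpha>))"
    using nn_integral_F_fun(1)[OF t \<alpha>] by (simp add: set_integrable_def)
  then have "(\<lambda>y. \<bar>g' y\<bar> * f (1 / y)) absolutely_integrable_on {1..}"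
    using set_integrable_cong[of lebesgue lebesgue "{1..}" "{1..}" "\<lambda>y. \<bar>g' y\<bar> * f (1 / y)"
        "\<lambda>y. 1 / (y * (y + t) powr \<alpha>)"] substituted by simp
  moreover have "integral {1..} (\<lambda>y. \<bar>g' y\<bar> * f (1 / y)) = integral {1..} (\<lambda>y. 1 / (y * (y + t) powr \<alpha>))"
    by (rule integral_cong) (rule substituted)
  moreover have "\<dots> = F_fun \<alpha> t"
    using set_borel_integral_eq_integral(2)[OF nn_integral_F_fun(1)[OF t \<alpha>]] by (simp add: F_fun_def)
  ultimately have "f absolutely_integrable_on {0<..1} \<and> integral {0<..1} f = F_fun \<alpha> t"
    using has_absolute_integral_change_of_variables_1'[OF _ deriv inj, of f "F_fun \<alpha> t"] image by simp
  then show ?thesis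
    using set_lebesgue_integral_eq_integral(1) unfolding f_def by (metis integrable_integral)
qed

lemma nn_integral_one_plus_mult_powr_le_F_fun:
  assumes t: "0 \<le> t" and \<alpha>: "0 < \<alpha>"
  shows "(\<integral>\<^sup>+x. indicator {0<..<1} x * ennreal ((1 + t * x) powr - \<alpha>) * ennreal (x powr (\<alpha> - 1)) \<partial>lborel)
     \<le> ennreal (F_fun \<alpha> t)"
proof -
  have "(\<integral>\<^sup>+x. indicator {0<..<1} x * ennreal ((1 + t * x) powr - \<alpha>) * ennreal (x powr (\<alpha> - 1)) \<partial>lborel)
      \<le> (\<integral>\<^sup>+x. ennreal ((1 + t * x) powr - \<alpha> * x powr (\<alpha> - 1)) * indicator {0<..1} x \<partial>lborel)"
    by (intro nn_integral_mono) (auto simp: indicator_def ennreal_mult)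
  also have "\<dots> = ennreal (F_fun \<alpha> t)"
    using t by (intro nn_integral_has_integral_lebesgue' has_integral_F_fun_substitution[OF t \<alpha>]) auto
  finally show ?thesis .
qed

lemma F_fun_ge:
  assumes t: "0 \<le> t" and \<alpha>: "0 < \<alpha>"
  shows "(1 + t) powr - \<alpha> / \<alpha> \<le> F_fun \<alpha> t"
proof -
  have "(1 + t) powr - \<alpha> * y powr (- 1 - \<alpha>) \<le> 1 / (y * (y + t) powr \<alpha>)" if y: "1 \<le> y" for y
  proof -
    have "(y + t) powr \<alpha> \<le> (y * (1 + t)) powr \<alpha>"
      using y t \<alpha> mult_left_mono[of 1 y t] by (intro powr_mono2) (auto simp: algebra_simps)
    then have "y * (y + t) powr \<alpha> \<le> y * (y powr \<alpha> * (1 + t) powr \<alpha>)"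
      using y t by (simp add: powr_mult)
    then have "1 / (y * (y powr \<alpha> * (1 + t) powr \<alpha>)) \<le> 1 / (y * (y + t) powr \<alpha>)"
      using y t by (intro divide_left_mono) auto
    then show ?thesis
      using y t by (simp add: powr_minus_divide powr_diff field_simps)
  qed
  then have "ennreal ((1 + t) powr - \<alpha>) * (\<integral>\<^sup>+y. indicator {1..} y * ennreal (y powr (- 1 - \<alpha>)) \<partial>lborel)
      \<le> (\<integral>\<^sup>+y. indicator {1..} y * ennreal (1 / (y * (y + t) powr \<alpha>)) \<partial>lborel)"
    by (subst nn_integral_cmult[symmetric])
       (auto intro!: nn_integral_mono simp: indicator_def ennreal_mult[symmetric] ennreal_leI)
  then have "ennreal ((1 + t) powr - \<alpha> * (1 / \<alpha>)) \<le> ennreal (F_fun \<alpha> t)"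
    using \<alpha> by (simp add: nn_integral_powr_atLeast nn_integral_F_fun(2)[OF t \<alpha>] ennreal_mult[symmetric])
  moreover have "0 < (1 + t) powr - \<alpha> * (1 / \<alpha>)"
    using t \<alpha> by simp
  ultimately show ?thesis
    by (simp add: ennreal_le_iff2 divide_inverse)
qed

lemma F_fun_le:
  assumes t: "0 \<le> t" and \<alpha>: "0 < \<alpha>"
  shows "F_fun \<alpha> t \<le> (1 + t) powr - \<alpha> * (ln (1 + t) + 1 / \<alpha>)"
proof -
  let ?w = "(1 + t) powr - \<alpha>"
  have pointwise: "indicator {1..} y * ennreal (1 / (y * (y + t) powr \<alpha>))
      \<le> ennreal ?w * (indicator {1..1 + t} y * ennreal (1 / y)) + indicator {1 + t..} y * ennreal (y powr (- 1 - \<alpha>))"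
    for y
  proof (cases "1 \<le> y")
    case y: True
    show ?thesis
    proof (cases "y \<le> 1 + t")
      case True
      have "(1 + t) powr \<alpha> \<le> (y + t) powr \<alpha>"
        using y t \<alpha> by (intro powr_mono2) auto
      then have "1 / (y * (y + t) powr \<alpha>) \<le> ?w * (1 / y)"
        using y t by (simp add: powr_minus_divide frac_le)
      then show ?thesis
        using y True by (auto simp: indicator_def ennreal_mult[symmetric] intro!: ennreal_leI add_increasing2)
    next
      case False
      have "y * y powr \<alpha> \<le> y * (y + t) powr \<alpha>"
        using y t \<alpha> by (intro mult_left_mono powr_mono2) auto
      then have "1 / (y * (y + t) powr \<alpha>) \<le> y powr (- 1 - \<alpha>)"
        using y by (simp add: powr_diff powr_minus_divide frac_le)
      then show ?thesis
        using y False by (auto simp: indicator_def intro!: ennreal_leI)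
    qed
  qed simp
  have "((\<lambda>y. 1 / y) has_integral ln (1 + t) - ln 1) {1..1 + t}"
    using t by (intro fundamental_theorem_of_calculus)
       (auto intro!: derivative_eq_intros simp: has_real_derivative_iff_has_vector_derivative[symmetric])
  from nn_integral_has_integral_lebesgue'[OF _ this]
  have ln: "(\<integral>\<^sup>+y. indicator {1..1 + t} y * ennreal (1 / y) \<partial>lborel) = ennreal (ln (1 + t))"
    by (simp add: mult.commute)
  have "ennreal (F_fun \<alpha> t) \<le> (\<integral>\<^sup>+y. ennreal ?w * (indicator {1..1 + t} y * ennreal (1 / y))
      + indicator {1 + t..} y * ennreal (y powr (- 1 - \<alpha>)) \<partial>lborel)"
    unfolding nn_integral_F_fun(2)[OF t \<alpha>, symmetric] by (intro nn_integral_mono pointwise)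
  also have "\<dots> = ennreal (?w * ln (1 + t) + ?w / \<alpha>)"
    using t \<alpha> by (simp add: nn_integral_add nn_integral_cmult ln nn_integral_powr_atLeast ennreal_mult)
  finally show ?thesis
    using t \<alpha> by (subst (asm) ennreal_le_iff) (auto simp: algebra_simps)
qed

lemma F_fun_le_log:
  assumes t: "0 \<le> t" and \<alpha>: "0 < \<alpha>"
  shows "F_fun \<alpha> t \<le> (1 + 1 / \<alpha>) * ln (t + exp 1) / (1 + t) powr \<alpha>"
proof -
  have pos: "0 < t + exp 1"
    using t by (simp add: add_nonneg_pos)
  have "ln (1 + t) \<le> ln (t + exp 1)"
    using t pos exp_ge_add_one_self[of 1] by (subst ln_le_cancel_iff) auto
  moreover have "1 \<le> ln (t + exp 1)"
    using t by (subst ln_ge_iff[OF pos]) auto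
  ultimately have "ln (1 + t) + 1 / \<alpha> \<le> ln (t + exp 1) + ln (t + exp 1) / \<alpha>"
    using \<alpha> by (intro add_mono divide_right_mono) auto
  then have "ln (1 + t) + 1 / \<alpha> \<le> (1 + 1 / \<alpha>) * ln (t + exp 1)"
    by (simp add: algebra_simps)
  then have "(1 + t) powr - \<alpha> * (ln (1 + t) + 1 / \<alpha>) \<le> (1 + t) powr - \<alpha> * ((1 + 1 / \<alpha>) * ln (t + exp 1))"
    by (intro mult_left_mono) auto
  with F_fun_le[OF assms] show ?thesis
    by (simp add: powr_minus_divide)
qed

lemma F_fun_log_bound_imp_ge:
  assumes \<alpha>: "0 < \<alpha>" and bound: "\<forall>t>0. F_fun \<alpha> t \<le> c * ln (t + exp 1) / (1 + t) powr \<alpha>"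
  shows "1 / \<alpha> \<le> c"
proof -
  have "1 / \<alpha> \<le> c * ln (t + exp 1)" if "0 < t" for t
  proof -
    have "(1 + t) powr - \<alpha> / \<alpha> \<le> c * ln (t + exp 1) / (1 + t) powr \<alpha>"
      using F_fun_ge[of t \<alpha>] bound that \<alpha> by fastforce
    moreover have "0 < (1 + t) powr \<alpha>"
      using that by simp
    ultimately show ?thesis
      using \<alpha> by (simp add: powr_minus_divide field_simps)
  qed
  then have "\<forall>\<^sub>F t in at_right 0. 1 / \<alpha> \<le> c * ln (t + exp 1)"
    by (auto simp: eventually_at_filter intro: always_eventually)
  moreover have "((\<lambda>t. c * ln (t + exp 1)) \<longlongrightarrow> c * ln (0 + exp 1)) (at_right 0)"
    by (intro tendsto_intros) auto
  ultimately show ?thesis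
    using tendsto_lowerbound[of _ "c * ln (0 + exp 1)"] by force
qed

section \<open>The weighted estimates\<close>

lemma stieltjes_weight_powr_le:
  assumes a\<^sub>1: "0 < \<alpha>\<^sub>1" and a\<^sub>2: "0 < \<alpha>\<^sub>2"
    and bound: "\<forall>t>0. F_fun \<alpha>\<^sub>1 t \<le> c * ln (t + exp 1) / (1 + t) powr \<alpha>\<^sub>1"
    and st: "0 \<le> s" "0 \<le> t"
  shows "stieltjes_weight \<alpha>\<^sub>1 \<alpha>\<^sub>2 (\<lambda>\<tau>. ennreal ((1 + \<tau>) powr - \<alpha>\<^sub>1)) s t
    \<le> ennreal ((1 / \<alpha>\<^sub>2 + c) / Beta \<alpha>\<^sub>1 \<alpha>\<^sub>2) * ennreal (ln (s + exp 1) / (1 + s) powr \<alpha>\<^sub>1)"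
proof -
  let ?B = "Beta \<alpha>\<^sub>1 \<alpha>\<^sub>2" and ?K = "(1 / \<alpha>\<^sub>2 + c) / Beta \<alpha>\<^sub>1 \<alpha>\<^sub>2"
  let ?W = "\<lambda>s. ln (s + exp 1) / (1 + s) powr \<alpha>\<^sub>1"
  have B: "0 < ?B"
    using a\<^sub>1 a\<^sub>2 by (rule Beta_real_pos)
  have c: "1 / \<alpha>\<^sub>1 \<le> c"
    using a\<^sub>1 bound by (rule F_fun_log_bound_imp_ge)
  then have K: "1 \<le> ?K"
    using Beta_le_add_inverse[OF a\<^sub>1 a\<^sub>2] B by (simp add: field_simps)
  have c0: "0 \<le> c"
    using c a\<^sub>1 by (meson order_trans less_imp_le zero_le_divide_1_iff)
  have "1 \<le> ln (s + exp 1)"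
    using st by (subst ln_ge_iff) (auto simp: add_nonneg_pos)
  then have W: "(1 + s) powr - \<alpha>\<^sub>1 \<le> ?W s"
    using st by (simp add: powr_minus_divide divide_right_mono)
  have W0: "0 \<le> ?W s"
    using W powr_ge_zero[of "1 + s" "- \<alpha>\<^sub>1"] by linarith
  show ?thesis
  proof (rule stieltjes_weight_le[OF a\<^sub>1 a\<^sub>2 st])
    have "?W s \<le> ?K * ?W s"
      using mult_right_mono[OF K W0] by simp
    then have "(1 + s) powr - \<alpha>\<^sub>1 \<le> ?K * ?W s"
      using W by linarith
    then show "ennreal ((1 + s) powr - \<alpha>\<^sub>1) \<le> ennreal ?K * ennreal (?W s)"
      using K W0 by (simp add: ennreal_mult[symmetric] ennreal_leI)
  next
    assume "0 < s"
    have "(\<integral>\<^sup>+x. indicator {0<..<1} x * ennreal ((1 + s * x) powr - \<alpha>\<^sub>1) * ennreal (x powr (\<alpha>\<^sub>1 - 1)) \<partial>lborel)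
        \<le> ennreal (c * ?W s)"
      using nn_integral_one_plus_mult_powr_le_F_fun[OF st(1) a\<^sub>1] bound \<open>0 < s\<close>
      by (auto intro: order_trans ennreal_leI)
    moreover have "(1 + s) powr - \<alpha>\<^sub>1 / \<alpha>\<^sub>2 \<le> ?W s / \<alpha>\<^sub>2"
      using divide_right_mono[OF W, of \<alpha>\<^sub>2] a\<^sub>2 by simp
    ultimately have "ennreal (1 / ?B) *
        ((\<integral>\<^sup>+x. indicator {0<..<1} x * ennreal ((1 + s * x) powr - \<alpha>\<^sub>1) * ennreal (x powr (\<alpha>\<^sub>1 - 1)) \<partial>lborel)
          + ennreal ((1 + s) powr - \<alpha>\<^sub>1 / \<alpha>\<^sub>2))
      \<le> ennreal (1 / ?B) * (ennreal (c * ?W s) + ennreal (?W s / \<alpha>\<^sub>2))"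
      by (intro mult_left_mono add_mono ennreal_leI) auto
    also have "\<dots> = ennreal ?K * ennreal (?W s)"
      using B c0 W0 a\<^sub>2 st
      by (simp add: ennreal_mult[symmetric] ennreal_plus[symmetric] field_simps del: ennreal_plus)
    finally show "ennreal (1 / ?B) *
        ((\<integral>\<^sup>+x. indicator {0<..<1} x * ennreal ((1 + s * x) powr - \<alpha>\<^sub>1) * ennreal (x powr (\<alpha>\<^sub>1 - 1)) \<partial>lborel)
          + ennreal ((1 + s) powr - \<alpha>\<^sub>1 / \<alpha>\<^sub>2)) \<le> ennreal ?K * ennreal (?W s)" .
  qed (use a\<^sub>1 in \<open>auto intro!: ennreal_leI powr_mono2'\<close>)
qed

lemma wnorm_total_variation_stieltjes_conv_le:
  assumes a\<^sub>1: "0 < \<alpha>\<^sub>1" and a\<^sub>2: "0 < \<alpha>\<^sub>2"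
    and bound: "\<forall>t>0. F_fun \<alpha>\<^sub>1 t \<le> c * ln (t + exp 1) / (1 + t) powr \<alpha>\<^sub>1"
    and R\<^sub>1: "cRadon_rep \<nu>\<^sub>1 h\<^sub>1" and R\<^sub>2: "cRadon_rep \<nu>\<^sub>2 h\<^sub>2"
  shows "wnorm \<alpha>\<^sub>1 (total_variation (stieltjes_conv \<alpha>\<^sub>1 \<alpha>\<^sub>2 \<nu>\<^sub>1 h\<^sub>1 \<nu>\<^sub>2 h\<^sub>2))
    \<le> ennreal ((1 / \<alpha>\<^sub>2 + c) / Beta \<alpha>\<^sub>1 \<alpha>\<^sub>2) * wnorm_log \<alpha>\<^sub>1 \<nu>\<^sub>1 * wnorm 0 \<nu>\<^sub>2"
proof -
  let ?K = "(1 / \<alpha>\<^sub>2 + c) / Beta \<alpha>\<^sub>1 \<alpha>\<^sub>2"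
  note [measurable_cong] = cRadon_rep_sets[OF R\<^sub>1]
  have "wnorm \<alpha>\<^sub>1 (total_variation (stieltjes_conv \<alpha>\<^sub>1 \<alpha>\<^sub>2 \<nu>\<^sub>1 h\<^sub>1 \<nu>\<^sub>2 h\<^sub>2))
      = (\<integral>\<^sup>+\<tau>. ennreal ((1 + \<tau>) powr - \<alpha>\<^sub>1) \<partial>total_variation (stieltjes_conv \<alpha>\<^sub>1 \<alpha>\<^sub>2 \<nu>\<^sub>1 h\<^sub>1 \<nu>\<^sub>2 h\<^sub>2))"
    by (simp add: wnorm_def)
  also have "\<dots> \<le> (\<integral>\<^sup>+s. ennreal ?K * ennreal (ln (s + exp 1) / (1 + s) powr \<alpha>\<^sub>1) \<partial>\<nu>\<^sub>1) * wnorm 0 \<nu>\<^sub>2"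
    by (rule nn_integral_total_variation_stieltjes_conv_le_wnorm[OF R\<^sub>1 R\<^sub>2 a\<^sub>1 a\<^sub>2 _ _
          stieltjes_weight_powr_le[OF a\<^sub>1 a\<^sub>2 bound]]; measurable)
  also have "(\<integral>\<^sup>+s. ennreal ?K * ennreal (ln (s + exp 1) / (1 + s) powr \<alpha>\<^sub>1) \<partial>\<nu>\<^sub>1) = ennreal ?K * wnorm_log \<alpha>\<^sub>1 \<nu>\<^sub>1"
    unfolding wnorm_log_def by (rule nn_integral_cmult) measurable
  finally show ?thesis .
qed

lemma nn_integral_dilate:
  fixes h :: "real \<Rightarrow> ennreal"
  assumes a: "0 < a" and [measurable]: "h \<in> borel_measurable borel"
  shows "(\<integral>\<^sup>+x. indicator {0<..<1} x * h (a * x) * ennreal (x powr (\<alpha> - 1)) \<partial>lborel)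
    = ennreal (a powr - \<alpha>) * (\<integral>\<^sup>+y. indicator {0<..<a} y * h y * ennreal (y powr (\<alpha> - 1)) \<partial>lborel)"
proof -
  let ?L = "\<integral>\<^sup>+x. indicator {0<..<1} x * h (a * x) * ennreal (x powr (\<alpha> - 1)) \<partial>lborel"
  have scale: "indicator {0<..<a} (a * x) * h (a * x) * ennreal ((a * x) powr (\<alpha> - 1))
      = ennreal (a powr (\<alpha> - 1)) * (indicator {0<..<1} x * h (a * x) * ennreal (x powr (\<alpha> - 1)))" for x
    using a by (cases "x \<in> {0<..<1}")
       (auto simp: powr_mult ennreal_mult zero_less_mult_iff indicator_def ac_simps)
  have "(\<integral>\<^sup>+y. indicator {0<..<a} y * h y * ennreal (y powr (\<alpha> - 1)) \<partial>lborel)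
      = ennreal a * (\<integral>\<^sup>+x. indicator {0<..<a} (a * x) * h (a * x) * ennreal ((a * x) powr (\<alpha> - 1)) \<partial>lborel)"
    using a nn_integral_real_affine[of "\<lambda>y. indicator {0<..<a} y * h y * ennreal (y powr (\<alpha> - 1))" a 0]
    by simp
  also have "\<dots> = ennreal a * (ennreal (a powr (\<alpha> - 1)) * ?L)"
    by (simp only: scale, subst nn_integral_cmult) simp_all
  also have "\<dots> = ennreal (a powr \<alpha>) * ?L"
    using a powr_add[of a 1 "\<alpha> - 1"] by (simp add: mult.assoc[symmetric] ennreal_mult[symmetric])
  finally show ?thesis
    using a by (simp add: mult.assoc[symmetric] ennreal_mult[symmetric] powr_minus)
qed

lemma nn_integral_dilate_le:
  fixes h k :: "real \<Rightarrow> ennreal"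
  assumes a: "0 < a" and \<alpha>: "0 < \<alpha>"
    and [measurable]: "h \<in> borel_measurable borel" "k \<in> borel_measurable borel"
    and h_le_1: "\<And>y. 0 < y \<Longrightarrow> h y \<le> 1"
    and h_le_k: "\<And>y. 1 \<le> y \<Longrightarrow> h y * ennreal (y powr (\<alpha> - 1)) \<le> k y"
  shows "(\<integral>\<^sup>+x. indicator {0<..<1} x * h (a * x) * ennreal (x powr (\<alpha> - 1)) \<partial>lborel)
    \<le> ennreal (2 powr \<alpha> * (1 + a) powr - \<alpha>) * (ennreal (1 / \<alpha>) + (\<integral>\<^sup>+y. indicator {1..} y * k y \<partial>lborel))"
proof -
  let ?L = "\<integral>\<^sup>+x. indicator {0<..<1} x * h (a * x) * ennreal (x powr (\<alpha> - 1)) \<partial>lborel"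
  let ?R = "ennreal (1 / \<alpha>) + (\<integral>\<^sup>+y. indicator {1..} y * k y \<partial>lborel)"
  have h_mult: "h y * c \<le> c" if "0 < y" for y c
    using mult_right_mono[OF h_le_1[OF that], of c] by simp
  have "?L \<le> (\<integral>\<^sup>+x. indicator {0<..<1} x * ennreal (x powr (\<alpha> - 1)) \<partial>lborel)"
    using a by (intro nn_integral_mono) (auto simp: indicator_def intro!: h_mult)
  also have "\<dots> \<le> ?R"
    using \<alpha> by (simp add: nn_integral_powr_0_1)
  finally have small: "?L \<le> ?R" .
  have "(\<integral>\<^sup>+y. indicator {0<..<a} y * h y * ennreal (y powr (\<alpha> - 1)) \<partial>lborel)
      \<le> (\<integral>\<^sup>+y. indicator {0<..<1} y * ennreal (y powr (\<alpha> - 1)) + indicator {1..} y * k y \<partial>lborel)"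
    using h_le_k by (intro nn_integral_mono) (auto simp: indicator_def not_less intro!: h_mult)
  also have "\<dots> = ?R"
    using \<alpha> by (simp add: nn_integral_add nn_integral_powr_0_1)
  finally have large: "?L \<le> ennreal (a powr - \<alpha>) * ?R"
    unfolding nn_integral_dilate[OF a assms(3)] by (rule mult_left_mono) simp
  have two_powr: "2 powr \<alpha> * 2 powr - \<alpha> = 1"
    by (simp add: powr_minus)
  show ?thesis
  proof (cases "a \<le> 1")
    case True
    have "2 powr - \<alpha> \<le> (1 + a) powr - \<alpha>"
      using True a \<alpha> by (intro powr_mono2') auto
    then have "1 \<le> 2 powr \<alpha> * (1 + a) powr - \<alpha>"
      using two_powr mult_left_mono[of "2 powr - \<alpha>" "(1 + a) powr - \<alpha>" "2 powr \<alpha>"] by simp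
    then have "ennreal 1 * ?R \<le> ennreal (2 powr \<alpha> * (1 + a) powr - \<alpha>) * ?R"
      by (intro mult_right_mono ennreal_leI) auto
    with small show ?thesis
      by simp
  next
    case False
    have "(2 * a) powr - \<alpha> \<le> (1 + a) powr - \<alpha>"
      using False a \<alpha> by (intro powr_mono2') auto
    then have "2 powr \<alpha> * (2 * a) powr - \<alpha> \<le> 2 powr \<alpha> * (1 + a) powr - \<alpha>"
      by simp
    moreover have "2 powr \<alpha> * (2 * a) powr - \<alpha> = a powr - \<alpha>"
      using a two_powr by (simp add: powr_mult mult.assoc[symmetric])
    ultimately have "ennreal (a powr - \<alpha>) * ?R \<le> ennreal (2 powr \<alpha> * (1 + a) powr - \<alpha>) * ?R"
      by (intro mult_right_mono ennreal_leI) auto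
    with large show ?thesis
      by (rule order_trans)
  qed
qed

lemma nn_integral_psi_dilate_le:
  fixes \<phi> :: "real \<Rightarrow> real"
  assumes a\<^sub>1: "0 < \<alpha>\<^sub>1" and \<phi>: "mono \<phi>" "\<And>t. 1 \<le> \<phi> t"
    and I: "(\<integral>\<^sup>+y. indicator {1..} y * ennreal (1 / (y * \<phi> y)) \<partial>lborel) = ennreal I"
    and s: "0 < s"
  shows "(\<integral>\<^sup>+x. indicator {0<..<1} x * ennreal (1 / (\<phi> (s * x) * (1 + s * x) powr \<alpha>\<^sub>1)) *
      ennreal (x powr (\<alpha>\<^sub>1 - 1)) \<partial>lborel)
    \<le> ennreal (2 powr \<alpha>\<^sub>1 * (1 + s) powr - \<alpha>\<^sub>1) * (ennreal (1 / \<alpha>\<^sub>1) + ennreal I)"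
  unfolding I[symmetric]
proof (rule nn_integral_dilate_le[OF s a\<^sub>1])
  have [measurable]: "\<phi> \<in> borel_measurable borel"
    by (rule borel_measurable_mono[OF \<phi>(1)])
  show "(\<lambda>y. ennreal (1 / (\<phi> y * (1 + y) powr \<alpha>\<^sub>1))) \<in> borel_measurable borel"
    "(\<lambda>y. ennreal (1 / (y * \<phi> y))) \<in> borel_measurable borel"
    by (measurable, measurable)
next
  fix y :: real
  assume "0 < y"
  then have "1 \<le> (1 + y) powr \<alpha>\<^sub>1"
    using a\<^sub>1 by (intro ge_one_powr_ge_zero) auto
  then have "1 \<le> \<phi> y * (1 + y) powr \<alpha>\<^sub>1"
    using \<phi>(2)[of y] mult_mono[of 1 "\<phi> y" 1 "(1 + y) powr \<alpha>\<^sub>1"] by simp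
  then show "ennreal (1 / (\<phi> y * (1 + y) powr \<alpha>\<^sub>1)) \<le> 1"
    by simp
next
  fix y :: real
  assume y: "1 \<le> y"
  have "y powr (\<alpha>\<^sub>1 - 1) * y \<le> (1 + y) powr \<alpha>\<^sub>1"
    using y a\<^sub>1 by (simp add: powr_diff powr_mono2)
  then have "1 / (\<phi> y * (1 + y) powr \<alpha>\<^sub>1) * y powr (\<alpha>\<^sub>1 - 1) \<le> 1 / (y * \<phi> y)"
    using y \<phi>(2)[of y] by (simp add: field_simps)
  then show "ennreal (1 / (\<phi> y * (1 + y) powr \<alpha>\<^sub>1)) * ennreal (y powr (\<alpha>\<^sub>1 - 1)) \<le> ennreal (1 / (y * \<phi> y))"
    using y \<phi>(2)[of y] by (simp add: ennreal_mult[symmetric] ennreal_leI)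
qed

lemma stieltjes_weight_psi_le:
  fixes \<phi> :: "real \<Rightarrow> real"
  assumes a\<^sub>1: "0 < \<alpha>\<^sub>1" and a\<^sub>2: "0 < \<alpha>\<^sub>2" and \<phi>: "mono \<phi>" "\<And>t. 1 \<le> \<phi> t"
    and I: "(\<integral>\<^sup>+y. indicator {1..} y * ennreal (1 / (y * \<phi> y)) \<partial>lborel) = ennreal I" and I0: "0 \<le> I"
    and st: "0 \<le> s" "0 \<le> t"
  shows "stieltjes_weight \<alpha>\<^sub>1 \<alpha>\<^sub>2 (\<lambda>\<tau>. ennreal (1 / (\<phi> \<tau> * (1 + \<tau>) powr \<alpha>\<^sub>1))) s t
    \<le> ennreal ((1 + (2 powr \<alpha>\<^sub>1 * (1 / \<alpha>\<^sub>1 + I) + 1 / \<alpha>\<^sub>2) / Beta \<alpha>\<^sub>1 \<alpha>\<^sub>2) * (1 + s) powr - \<alpha>\<^sub>1)"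
proof -
  let ?B = "Beta \<alpha>\<^sub>1 \<alpha>\<^sub>2" and ?D = "2 powr \<alpha>\<^sub>1 * (1 / \<alpha>\<^sub>1 + I) + 1 / \<alpha>\<^sub>2"
  let ?G = "\<lambda>\<tau>. ennreal (1 / (\<phi> \<tau> * (1 + \<tau>) powr \<alpha>\<^sub>1))" and ?v = "(1 + s) powr - \<alpha>\<^sub>1"
  have B: "0 < ?B"
    using a\<^sub>1 a\<^sub>2 by (rule Beta_real_pos)
  have D: "0 \<le> ?D"
    using I0 a\<^sub>1 a\<^sub>2 by simp
  have [measurable]: "\<phi> \<in> borel_measurable borel"
    by (rule borel_measurable_mono[OF \<phi>(1)])
  have G_le: "?G \<tau> \<le> ennreal ((1 + \<tau>) powr - \<alpha>\<^sub>1)" if "0 \<le> \<tau>" for \<tau>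
  proof -
    have "(1 + \<tau>) powr \<alpha>\<^sub>1 \<le> \<phi> \<tau> * (1 + \<tau>) powr \<alpha>\<^sub>1"
      using \<phi>(2)[of \<tau>] mult_right_mono[of 1 "\<phi> \<tau>" "(1 + \<tau>) powr \<alpha>\<^sub>1"] by simp
    then show ?thesis
      using that by (intro ennreal_leI) (simp add: powr_minus_divide divide_left_mono)
  qed
  have anti: "?G \<tau> \<le> ?G \<sigma>" if "0 \<le> \<sigma>" "\<sigma> \<le> \<tau>" for \<sigma> \<tau>
  proof -
    have "\<phi> \<sigma> * (1 + \<sigma>) powr \<alpha>\<^sub>1 \<le> \<phi> \<tau> * (1 + \<tau>) powr \<alpha>\<^sub>1"
      using that a\<^sub>1 \<phi>(2)[of \<sigma>] \<phi>(2)[of \<tau>] by (intro mult_mono monoD[OF \<phi>(1)] powr_mono2) auto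
    moreover have "0 < \<phi> \<sigma> * (1 + \<sigma>) powr \<alpha>\<^sub>1"
      using that \<phi>(2)[of \<sigma>] by (intro mult_pos_pos) auto
    ultimately show ?thesis
      by (intro ennreal_leI divide_left_mono) auto
  qed
  show ?thesis
  proof (rule stieltjes_weight_le[OF a\<^sub>1 a\<^sub>2 st _ anti G_le])
    have "1 \<le> 1 + ?D / ?B"
      using B D by simp
    then show "ennreal ?v \<le> ennreal ((1 + ?D / ?B) * ?v)"
      by (intro ennreal_leI) (simp add: mult_le_cancel_right1)
  next
    assume "0 < s"
    then have "ennreal (1 / ?B) *
        ((\<integral>\<^sup>+x. indicator {0<..<1} x * ?G (s * x) * ennreal (x powr (\<alpha>\<^sub>1 - 1)) \<partial>lborel) + ennreal (?v / \<alpha>\<^sub>2))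
      \<le> ennreal (1 / ?B) * (ennreal (2 powr \<alpha>\<^sub>1 * ?v) * (ennreal (1 / \<alpha>\<^sub>1) + ennreal I) + ennreal (?v / \<alpha>\<^sub>2))"
      by (intro mult_left_mono add_mono nn_integral_psi_dilate_le[OF a\<^sub>1 \<phi> I]) auto
    also have "\<dots> = ennreal (?D / ?B * ?v)"
      using B a\<^sub>1 a\<^sub>2 I0
      by (simp add: ennreal_mult[symmetric] ennreal_plus[symmetric] field_simps del: ennreal_plus)
    also have "\<dots> \<le> ennreal ((1 + ?D / ?B) * ?v)"
      by (intro ennreal_leI mult_right_mono) auto
    finally show "ennreal (1 / ?B) *
        ((\<integral>\<^sup>+x. indicator {0<..<1} x * ?G (s * x) * ennreal (x powr (\<alpha>\<^sub>1 - 1)) \<partial>lborel) + ennreal (?v / \<alpha>\<^sub>2))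
      \<le> ennreal ((1 + ?D / ?B) * ?v)" .
  qed measurable
qed

lemma nn_integral_total_variation_stieltjes_conv_psi_le:
  fixes \<psi> :: "real \<Rightarrow> real"
  assumes a\<^sub>1: "0 < \<alpha>\<^sub>1" and a\<^sub>2: "0 < \<alpha>\<^sub>2"
    and \<psi>: "\<And>t. 0 \<le> t \<Longrightarrow> 1 \<le> \<psi> t" "mono_on {0..} \<psi>"
    and I: "(\<integral>\<^sup>+ t\<in>{1..}. ennreal (1 / (t * \<psi> t)) \<partial>lborel) = ennreal I" and I0: "0 \<le> I"
    and R\<^sub>1: "cRadon_rep \<nu>\<^sub>1 h\<^sub>1" and R\<^sub>2: "cRadon_rep \<nu>\<^sub>2 h\<^sub>2"
  shows "(\<integral>\<^sup>+ t. ennreal (1 / (\<psi> t * (1 + t) powr \<alpha>\<^sub>1)) \<partial>total_variation (stieltjes_conv \<alpha>\<^sub>1 \<alpha>\<^sub>2 \<nu>\<^sub>1 h\<^sub>1 \<nu>\<^sub>2 h\<^sub>2))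
    \<le> ennreal (1 + (2 powr \<alpha>\<^sub>1 * (1 / \<alpha>\<^sub>1 + I) + 1 / \<alpha>\<^sub>2) / Beta \<alpha>\<^sub>1 \<alpha>\<^sub>2) * wnorm \<alpha>\<^sub>1 \<nu>\<^sub>1 * wnorm 0 \<nu>\<^sub>2"
proof -
  let ?C = "1 + (2 powr \<alpha>\<^sub>1 * (1 / \<alpha>\<^sub>1 + I) + 1 / \<alpha>\<^sub>2) / Beta \<alpha>\<^sub>1 \<alpha>\<^sub>2"
  \<comment> \<open>\<open>\<psi>\<close> is only controlled on \<open>[0, \<infinity>)\<close>, which carries \<open>|\<mu>|\<close>\<close>
  define \<phi> where "\<phi> t = \<psi> (max t 0)" for t
  have \<phi>: "mono \<phi>" "\<And>t. 1 \<le> \<phi> t"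
    unfolding \<phi>_def using \<psi> by (auto intro!: monoI mono_onD[OF \<psi>(2)])
  have [measurable]: "\<phi> \<in> borel_measurable borel"
    by (rule borel_measurable_mono[OF \<phi>(1)])
  have "(\<integral>\<^sup>+y. indicator {1..} y * ennreal (1 / (y * \<phi> y)) \<partial>lborel) = ennreal I"
    unfolding I[symmetric] by (intro nn_integral_cong) (auto simp: indicator_def \<phi>_def)
  note weight = stieltjes_weight_psi_le[OF a\<^sub>1 a\<^sub>2 \<phi> this I0]
  note [measurable_cong] = cRadon_rep_sets[OF R\<^sub>1]
  have "(\<integral>\<^sup>+ t. ennreal (1 / (\<psi> t * (1 + t) powr \<alpha>\<^sub>1)) \<partial>total_variation (stieltjes_conv \<alpha>\<^sub>1 \<alpha>\<^sub>2 \<nu>\<^sub>1 h\<^sub>1 \<nu>\<^sub>2 h\<^sub>2))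
      = (\<integral>\<^sup>+ t. ennreal (1 / (\<phi> t * (1 + t) powr \<alpha>\<^sub>1)) \<partial>total_variation (stieltjes_conv \<alpha>\<^sub>1 \<alpha>\<^sub>2 \<nu>\<^sub>1 h\<^sub>1 \<nu>\<^sub>2 h\<^sub>2))"
    by (intro nn_integral_cong_AE,
        use AE_total_variation_stieltjes_conv_nonneg[OF R\<^sub>1 R\<^sub>2 a\<^sub>1 a\<^sub>2] in eventually_elim)
       (simp add: \<phi>_def)
  also have "\<dots> \<le> (\<integral>\<^sup>+s. ennreal (?C * (1 + s) powr - \<alpha>\<^sub>1) \<partial>\<nu>\<^sub>1) * wnorm 0 \<nu>\<^sub>2"
    by (rule nn_integral_total_variation_stieltjes_conv_le_wnorm[OF R\<^sub>1 R\<^sub>2 a\<^sub>1 a\<^sub>2 _ _ weight]; measurable)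
  also have "(\<integral>\<^sup>+s. ennreal (?C * (1 + s) powr - \<alpha>\<^sub>1) \<partial>\<nu>\<^sub>1) = ennreal ?C * wnorm \<alpha>\<^sub>1 \<nu>\<^sub>1"
  proof -
    have "0 \<le> ?C"
      using a\<^sub>1 a\<^sub>2 I0 Beta_real_pos[OF a\<^sub>1 a\<^sub>2] by (intro add_nonneg_nonneg divide_nonneg_pos) auto
    then show ?thesis
      unfolding wnorm_def by (simp add: ennreal_mult nn_integral_cmult)
  qed
  finally show ?thesis .
qed

theorem theorem4p7:
  fixes \<alpha>\<^sub>1 \<alpha>\<^sub>2 :: real
  assumes "\<alpha>\<^sub>1 > 0" and "\<alpha>\<^sub>2 > 0"
  shows
   "(\<forall>\<psi> :: real \<Rightarrow> real.
       (\<forall>t\<ge>0. \<psi> t \<ge> 1) \<and> mono_on {0..} \<psi>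
       \<and> (\<integral>\<^sup>+ t\<in>{1..}. ennreal (1 / (t * \<psi> t)) \<partial>lborel) < \<infinity>
       \<longrightarrow> (\<exists>C>0. \<forall>\<nu>\<^sub>1 h\<^sub>1 \<nu>\<^sub>2 h\<^sub>2.
              cRadon_rep \<nu>\<^sub>1 h\<^sub>1 \<and> wnorm \<alpha>\<^sub>1 \<nu>\<^sub>1 < \<infinity>
              \<and> cRadon_rep \<nu>\<^sub>2 h\<^sub>2 \<and> wnorm 0 \<nu>\<^sub>2 < \<infinity>
              \<longrightarrow> (\<integral>\<^sup>+ t. ennreal (1 / (\<psi> t * (1 + t) powr \<alpha>\<^sub>1))
                     \<partial>(total_variation (stieltjes_conv \<alpha>\<^sub>1 \<alpha>\<^sub>2 \<nu>\<^sub>1 h\<^sub>1 \<nu>\<^sub>2 h\<^sub>2)))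
                  \<le> ennreal C * wnorm \<alpha>\<^sub>1 \<nu>\<^sub>1 * wnorm 0 \<nu>\<^sub>2))
    \<and> (\<exists>c>0. \<forall>t>0. F_fun \<alpha>\<^sub>1 t \<le> c * ln (t + exp 1) / (1 + t) powr \<alpha>\<^sub>1)
    \<and> (\<forall>c \<nu>\<^sub>1 h\<^sub>1 \<nu>\<^sub>2 h\<^sub>2.
          c > 0 \<and> (\<forall>t>0. F_fun \<alpha>\<^sub>1 t \<le> c * ln (t + exp 1) / (1 + t) powr \<alpha>\<^sub>1)
          \<and> cRadon_rep \<nu>\<^sub>1 h\<^sub>1 \<and> wnorm \<alpha>\<^sub>1 \<nu>\<^sub>1 < \<infinity>
          \<and> cRadon_rep \<nu>\<^sub>2 h\<^sub>2 \<and> wnorm 0 \<nu>\<^sub>2 < \<infinity>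
          \<and> wnorm_log \<alpha>\<^sub>1 \<nu>\<^sub>1 < \<infinity>
          \<longrightarrow> wnorm \<alpha>\<^sub>1 (total_variation (stieltjes_conv \<alpha>\<^sub>1 \<alpha>\<^sub>2 \<nu>\<^sub>1 h\<^sub>1 \<nu>\<^sub>2 h\<^sub>2))
              \<le> ennreal ((1 / \<alpha>\<^sub>2 + c) / Beta \<alpha>\<^sub>1 \<alpha>\<^sub>2)
                 * wnorm_log \<alpha>\<^sub>1 \<nu>\<^sub>1 * wnorm 0 \<nu>\<^sub>2)"
proof (intro conjI allI impI)
  fix \<psi> :: "real \<Rightarrow> real"
  assume \<psi>: "(\<forall>t\<ge>0. \<psi> t \<ge> 1) \<and> mono_on {0..} \<psi> \<and> (\<integral>\<^sup>+ t\<in>{1..}. ennreal (1 / (t * \<psi> t)) \<partial>lborel) < \<infinity>"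
  define I where "I = enn2real (\<integral>\<^sup>+ t\<in>{1..}. ennreal (1 / (t * \<psi> t)) \<partial>lborel)"
  have I: "(\<integral>\<^sup>+ t\<in>{1..}. ennreal (1 / (t * \<psi> t)) \<partial>lborel) = ennreal I" "0 \<le> I"
    using \<psi> by (simp_all add: I_def less_top[symmetric])
  show "\<exists>C>0. \<forall>\<nu>\<^sub>1 h\<^sub>1 \<nu>\<^sub>2 h\<^sub>2. cRadon_rep \<nu>\<^sub>1 h\<^sub>1 \<and> wnorm \<alpha>\<^sub>1 \<nu>\<^sub>1 < \<infinity> \<and> cRadon_rep \<nu>\<^sub>2 h\<^sub>2 \<and> wnorm 0 \<nu>\<^sub>2 < \<infinity>
      \<longrightarrow> (\<integral>\<^sup>+ t. ennreal (1 / (\<psi> t * (1 + t) powr \<alpha>\<^sub>1)) \<partial>total_variation (stieltjes_conv \<alpha>\<^sub>1 \<alpha>\<^sub>2 \<nu>\<^sub>1 h\<^sub>1 \<nu>\<^sub>2 h\<^sub>2))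
        \<le> ennreal C * wnorm \<alpha>\<^sub>1 \<nu>\<^sub>1 * wnorm 0 \<nu>\<^sub>2"
    using assms \<psi> I Beta_real_pos[OF assms]
    by (intro exI[of _ "1 + (2 powr \<alpha>\<^sub>1 * (1 / \<alpha>\<^sub>1 + I) + 1 / \<alpha>\<^sub>2) / Beta \<alpha>\<^sub>1 \<alpha>\<^sub>2"] conjI allI impI
          add_pos_nonneg divide_nonneg_pos nn_integral_total_variation_stieltjes_conv_psi_le) auto
next
  show "\<exists>c>0. \<forall>t>0. F_fun \<alpha>\<^sub>1 t \<le> c * ln (t + exp 1) / (1 + t) powr \<alpha>\<^sub>1"
    using assms F_fun_le_log by (intro exI[of _ "1 + 1 / \<alpha>\<^sub>1"] conjI add_pos_pos) auto
qed (use assms wnorm_total_variation_stieltjes_conv_le in auto)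

end
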